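(* Let $I,J\subset[n]$ be nonempty with $I\cup J=[n]$, $I\cap J=\emptyset$. Let $\mathcal V\subset(\mathbb{R}\cup\{-\infty\})^n$ be a finite set of vectors, none identically $-\infty$, such that for each $l\in[n]$ there is $v\in\mathcal V$ with $v_l\neq-\infty$. Define $T^{IJ}$ on $(\mathbb{R}\cup\{-\infty\})^n$ by $$T^{IJ}_l(x)=\begin{cases}\inf_{v\in\mathcal V,\,v_l\neq-\infty}\{-v_l+\max_{j\in J}(v_j+x_j)\}, & l\in I,\\ \inf_{v\in\mathcal V,\,v_l\neq-\infty}\{-v_l+\max_{i\in I}(v_i+x_i)\}, & l\in J.\end{cases}$$ Then $$\min_{a}\operatorname{dist}_H(\mathcal V,\mathcal H^{IJ}_a)=-\rho(T^{IJ})=\sup\{r\ge0:\exists w\in\mathbb{R}^n,\ B_{IJ}(w,r)\subset\operatorname{Span}(\mathcal V)\},$$ where the minimum is over $a\in(\mathbb{R}\cup\{-\infty\})^n$ not identically $-\infty$. The minimum is achieved by any such $b$ with $T^{IJ}(b)\ge\rho(T^{IJ})+b$. Moreover, if $\rho(T^{IJ})$ is finite, the supremum is achieved: there exists $c\in\mathbb{R}^n$ with $B_{IJ}(c,-\rho(T^{IJ}))\subset\operatorname{Span}(\mathcal V)$.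
   Context: $-\infty+c=-\infty$, $\max\emptyset=-\infty$. $\mathcal H^{IJ}_a=\{y:\max_{i\in I}(a_i+y_i)=\max_{j\in J}(a_j+y_j)\}$. Hilbert's projective metric $d(x,y)=\inf\{\lambda-\mu:\lambda,\mu\in\mathbb{R},\ \mu+y_l\le x_l\le\lambda+y_l\ \forall l\}$; $\operatorname{dist}_H(A,B)=\sup_{x\in A}\inf_{y\in B}d(x,y)$. $\operatorname{Span}(\mathcal V)$ is the tropical cone generated by $\mathcal V$ (entrywise maxima of vectors $\alpha+v$, $v\in\mathcal V$, $\alpha\in\mathbb{R}\cup\{-\infty\}$). $e^J\in\mathbb{R}^n$ has $e^J_l=0$ for $l\in I$ and $e^J_l=1$ for $l\in J$; the vertical interval is $B_{IJ}(w,r)=\{\lambda+w+\mu e^J:\mu\in[-r,r],\lambda\in\mathbb{R}\}$ for $w\in\mathbb{R}^n$, $r\in[0,+\infty]$. $\rho(T)=\sup\{\lambda\in\mathbb{R}\cup\{-\infty\}:\exists u\not\equiv-\infty,\ T(u)=\lambda+u\}$. *)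

theory Defs
  imports Complex_Main "HOL-Library.Extended_Real"
begin

text \<open>Vectors in (R \<union> {-\<infinity>})^n are modelled as functions 'n \<Rightarrow> ereal
  (index type 'n finite, playing the role of [n]) that never take the value +\<infinity>.\<close>

definition tvecs :: "('n \<Rightarrow> ereal) set" where
  "tvecs = {x. \<forall>l. x l \<noteq> \<infinity>}"

text \<open>Hilbert's projective metric (inf over reals; Inf of the empty set is +\<infinity>).\<close>
definition hilbert_d :: "('n \<Rightarrow> ereal) \<Rightarrow> ('n \<Rightarrow> ereal) \<Rightarrow> ereal" where
  "hilbert_d x y = Inf {ereal (lam - mu) | lam mu.
      \<forall>l. ereal mu + y l \<le> x l \<and> x l \<le> ereal lam + y l}"

definition dist_H :: "('n \<Rightarrow> ereal) set \<Rightarrow> ('n \<Rightarrow> ereal) set \<Rightarrow> ereal" where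
  "dist_H A B = (SUP x\<in>A. INF y\<in>B. hilbert_d x y)"

definition trop_hyp :: "'n set \<Rightarrow> 'n set \<Rightarrow> ('n \<Rightarrow> ereal) \<Rightarrow> ('n \<Rightarrow> ereal) set" where
  "trop_hyp I J a = {y \<in> tvecs. (SUP i\<in>I. a i + y i) = (SUP j\<in>J. a j + y j)}"

definition vert_int :: "'n set \<Rightarrow> ('n \<Rightarrow> real) \<Rightarrow> ereal \<Rightarrow> ('n \<Rightarrow> ereal) set" where
  "vert_int J w r = {(\<lambda>l. ereal (lam + w l + mu * (if l \<in> J then 1 else 0))) | lam mu.
      - r \<le> ereal mu \<and> ereal mu \<le> r}"

definition trop_span :: "('n \<Rightarrow> ereal) set \<Rightarrow> ('n \<Rightarrow> ereal) set" where
  "trop_span V = {x. \<exists>\<alpha>. (\<forall>v\<in>V. \<alpha> v \<noteq> \<infinity>) \<and> x = (\<lambda>l. SUP v\<in>V. \<alpha> v + v l)}"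

definition T_IJ :: "('n \<Rightarrow> ereal) set \<Rightarrow> 'n set \<Rightarrow> 'n set \<Rightarrow> ('n \<Rightarrow> ereal) \<Rightarrow> ('n \<Rightarrow> ereal)" where
  "T_IJ V I J x = (\<lambda>l.
     if l \<in> I then (INF v\<in>{v\<in>V. v l \<noteq> -\<infinity>}. - v l + (SUP j\<in>J. v j + x j))
     else (INF v\<in>{v\<in>V. v l \<noteq> -\<infinity>}. - v l + (SUP i\<in>I. v i + x i)))"

definition spec_rad :: "(('n \<Rightarrow> ereal) \<Rightarrow> ('n \<Rightarrow> ereal)) \<Rightarrow> ereal" where
  "spec_rad T = Sup {lam. lam \<noteq> \<infinity> \<and>
     (\<exists>u\<in>tvecs. (\<exists>l. u l \<noteq> -\<infinity>) \<and> T u = (\<lambda>l. lam + u l))}"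

end

theory Submission
  imports Defs "HOL-Analysis.Analysis"
begin

text \<open>Call \<open>\<lambda>\<close> a sub-eigenvalue of \<open>T = T\<^sup>I\<^sup>J\<close> if \<open>\<lambda> + a \<le> T a\<close> for some \<open>a \<noteq> -\<infinity>\<close>, and a
  super-eigenvalue if \<open>T z \<le> \<lambda> + z\<close> for some real \<open>z\<close>; let \<open>\<lambda>\<^sup>*\<close> be the supremum of the
  sub-eigenvalues. No sub-eigenvalue exceeds a super-eigenvalue, and in exponential coordinates
  Brouwer's fixed point theorem shows that every \<open>\<lambda>\<close> is one or the other. A finite \<open>\<lambda>\<^sup>*\<close> is both:
  sub-eigenvalues are closed by compactness, and super-eigenvalues are closed because, once a
  minimising vector of \<open>V\<close> is fixed for every coordinate, the condition becomes a system of
  difference constraints. Knaster--Tarski between a sub- and a super-eigenvector then gives an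
  eigenvector, so \<open>\<rho>(T) = \<lambda>\<^sup>*\<close>.

  If \<open>a\<close> is a sub-eigenvector at \<open>\<lambda> \<le> 0\<close>, raising one block of any \<open>v \<in> V\<close> by at most \<open>-\<lambda>\<close>
  moves it onto \<open>H\<^sub>a\<close>; conversely, points of \<open>H\<^sub>a\<close> within distance \<open>s\<close> of every \<open>v\<close> make \<open>a\<close> a
  sub-eigenvector at \<open>-s\<close>. Finally, a real vector lies in \<open>Span V\<close> iff each of its coordinates
  is attained by a tropical multiple of some \<open>v \<in> V\<close> lying below it, and \<open>B\<^sub>I\<^sub>J(c, r) \<subseteq> Span V\<close> iff
  this holds at each \<open>l\<close> for \<open>c\<close> lowered by \<open>r\<close> on the block opposite to \<open>l\<close>. A super-eigenvector
  \<open>-c\<close> at \<open>-r\<close> provides such witnesses on the opposite block only; projecting onto \<open>Span V\<close> one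
  block at a time completes them.\<close>

lemma ereal_uminus_add_cancel: "ereal (-c) + (ereal c + y) = y"
  by (cases y) auto

lemma INF_ereal_add_real: "(INF x\<in>A. ereal c + f x) = ereal c + (INF x\<in>A. f x)"
proof (rule antisym)
  show "ereal c + (INF x\<in>A. f x) \<le> (INF x\<in>A. ereal c + f x)"
    by (rule INF_greatest) (simp add: INF_lower add_left_mono)
  have "ereal (-c) + (INF x\<in>A. ereal c + f x) \<le> (INF x\<in>A. f x)"
  proof (rule INF_greatest)
    fix x assume "x \<in> A"
    then have "ereal (-c) + (INF x\<in>A. ereal c + f x) \<le> ereal (-c) + (ereal c + f x)"
      by (intro add_left_mono INF_lower)
    then show "ereal (-c) + (INF x\<in>A. ereal c + f x) \<le> f x"
      by (simp only: ereal_uminus_add_cancel)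
  qed
  then have "ereal c + (ereal (-c) + (INF x\<in>A. ereal c + f x)) \<le> ereal c + (INF x\<in>A. f x)"
    by (rule add_left_mono)
  then show "(INF x\<in>A. ereal c + f x) \<le> ereal c + (INF x\<in>A. f x)"
    using ereal_uminus_add_cancel[of "-c"] by simp
qed

lemma SUP_ereal_add_real: "A \<noteq> {} \<Longrightarrow> (SUP x\<in>A. ereal c + f x) = ereal c + (SUP x\<in>A. f x)"
  by (rule SUP_ereal_add_right) auto

lemma finite_INF_attained:
  fixes f :: "'a \<Rightarrow> 'b::complete_linorder"
  assumes "finite A" "A \<noteq> {}"
  obtains a where "a \<in> A" "(INF x\<in>A. f x) = f a"
  using Min_in[of "f ` A"] assms by (auto simp: Min_Inf)

lemma finite_SUP_attained:
  fixes f :: "'a \<Rightarrow> 'b::complete_linorder"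
  assumes "finite A" "A \<noteq> {}"
  obtains a where "a \<in> A" "(SUP x\<in>A. f x) = f a"
  using Max_in[of "f ` A"] assms by (auto simp: Max_Sup)

lemma SUP_finite_less_top:
  fixes f :: "'a \<Rightarrow> ereal"
  assumes "finite A" "A \<noteq> {}" "\<And>x. x \<in> A \<Longrightarrow> f x \<noteq> \<infinity>"
  shows "(SUP x\<in>A. f x) \<noteq> \<infinity>"
  using assms by (metis finite_SUP_attained)

lemma tvecs_add_ne_top: "x \<in> tvecs \<Longrightarrow> y \<in> tvecs \<Longrightarrow> x k + y k \<noteq> \<infinity>"
  by (auto simp: tvecs_def)

section \<open>Sub- and super-eigenvectors of \<open>T\<close>\<close>

locale cone_bipartition =
  fixes I J :: "'n::finite set" and V :: "('n \<Rightarrow> ereal) set"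
  assumes I_ne: "I \<noteq> {}" and J_ne: "J \<noteq> {}"
    and I_union_J: "I \<union> J = UNIV" and I_disj_J: "I \<inter> J = {}"
    and finite_V: "finite V" and V_tvecs: "V \<subseteq> tvecs"
    and V_nonzero: "\<forall>v\<in>V. \<exists>l. v l \<noteq> -\<infinity>"
    and V_covers: "\<forall>l. \<exists>v\<in>V. v l \<noteq> -\<infinity>"
begin

abbreviation T where "T \<equiv> T_IJ V I J"

definition opp_block :: "'n \<Rightarrow> 'n set" where
  "opp_block l = (if l \<in> I then J else I)"

definition V_at :: "'n \<Rightarrow> ('n \<Rightarrow> ereal) set" where
  "V_at l = {v\<in>V. v l \<noteq> -\<infinity>}"

lemma opp_block_ne: "opp_block l \<noteq> {}"
  using I_ne J_ne by (simp add: opp_block_def)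

lemma in_opp_block_iff: "k \<in> opp_block l \<longleftrightarrow> (k \<in> J \<longleftrightarrow> l \<in> I)"
  using I_union_J I_disj_J by (auto simp: opp_block_def)

lemma opp_block_eq_Compl: "B = I \<or> B = J \<Longrightarrow> l \<in> B \<Longrightarrow> opp_block l = - B"
  using I_union_J I_disj_J by (auto simp: opp_block_def)

lemma V_at_ne: "V_at l \<noteq> {}"
  using V_covers by (auto simp: V_at_def)

lemma finite_V_at: "finite (V_at l)"
  using finite_V by (simp add: V_at_def)

lemma V_ne_top: "v \<in> V \<Longrightarrow> v k \<noteq> \<infinity>"
  using V_tvecs by (auto simp: tvecs_def)

lemma V_entry_real:
  assumes "v \<in> V" "v k \<noteq> -\<infinity>"
  obtains b where "v k = ereal b"
  using assms V_ne_top by (cases "v k") auto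

lemma V_entry_eq_real: "v \<in> V \<Longrightarrow> v k \<noteq> -\<infinity> \<Longrightarrow> v k = ereal (real_of_ereal (v k))"
  using V_ne_top by (cases "v k") auto

lemma T_eq: "T x l = (INF v\<in>V_at l. - v l + (SUP k\<in>opp_block l. v k + x k))"
  by (simp add: T_IJ_def opp_block_def V_at_def)

lemma T_le: "v \<in> V_at l \<Longrightarrow> T x l \<le> - v l + (SUP k\<in>opp_block l. v k + x k)"
  unfolding T_eq by (rule INF_lower)

lemma T_attained:
  obtains v where "v \<in> V_at l" "T x l = - v l + (SUP k\<in>opp_block l. v k + x k)"
proof -
  obtain v where "v \<in> V_at l" "(INF v\<in>V_at l. - v l + (SUP k\<in>opp_block l. v k + x k))
      = - v l + (SUP k\<in>opp_block l. v k + x k)"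
    by (rule finite_INF_attained[OF finite_V_at V_at_ne])
  then show ?thesis using that by (simp only: T_eq)
qed

lemma T_mono:
  assumes "\<And>k. x k \<le> y k" shows "T x l \<le> T y l"
  unfolding T_eq by (intro INF_mono' add_left_mono SUP_mono' assms)

lemma T_add_const: "T (\<lambda>k. ereal c + x k) l = ereal c + T x l"
proof -
  have "- v l + (SUP k\<in>opp_block l. v k + (ereal c + x k))
      = ereal c + (- v l + (SUP k\<in>opp_block l. v k + x k))" for v :: "'n \<Rightarrow> ereal"
  proof -
    have "(SUP k\<in>opp_block l. v k + (ereal c + x k)) = (SUP k\<in>opp_block l. ereal c + (v k + x k))"
      by (simp only: add.left_commute)
    also have "\<dots> = ereal c + (SUP k\<in>opp_block l. v k + x k)"
      using opp_block_ne by (rule SUP_ereal_add_real)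
    finally show ?thesis by (simp only: add.left_commute)
  qed
  then show ?thesis unfolding T_eq by (simp only: INF_ereal_add_real)
qed

lemma T_ne_top:
  assumes "x \<in> tvecs" shows "T x l \<noteq> \<infinity>"
proof -
  obtain v where v: "v \<in> V_at l" using V_at_ne by blast
  then obtain b where "v l = ereal b" by (auto simp: V_at_def elim: V_entry_real)
  moreover have "(SUP k\<in>opp_block l. v k + x k) \<noteq> \<infinity>"
    using v assms V_tvecs
    by (intro SUP_finite_less_top opp_block_ne finite tvecs_add_ne_top) (auto simp: V_at_def)
  moreover have "T x l \<le> - v l + (SUP k\<in>opp_block l. v k + x k)" by (rule T_le[OF v])
  ultimately show ?thesis by (cases "T x l") auto
qed

definition subeigen :: "real \<Rightarrow> bool" where
  "subeigen lam \<longleftrightarrow> (\<exists>a\<in>tvecs. (\<exists>l. a l \<noteq> -\<infinity>) \<and> (\<forall>l. ereal lam + a l \<le> T a l))"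

definition supereigen :: "real \<Rightarrow> bool" where
  "supereigen lam \<longleftrightarrow> (\<exists>z::'n \<Rightarrow> real. \<forall>l. T (\<lambda>k. ereal (z k)) l \<le> ereal lam + ereal (z l))"

lemma supereigen_mono:
  assumes "supereigen lam" "lam \<le> lam'" shows "supereigen lam'"
proof -
  obtain z where "\<And>l. T (\<lambda>k. ereal (z k)) l \<le> ereal lam + ereal (z l)"
    using assms(1) unfolding supereigen_def by blast
  moreover have "ereal lam + ereal (z l) \<le> ereal lam' + ereal (z l)" for l
    using assms(2) by simp
  ultimately have "T (\<lambda>k. ereal (z k)) l \<le> ereal lam' + ereal (z l)" for l
    by (rule order_trans)
  then show ?thesis unfolding supereigen_def by blast
qed

lemma subeigen_mono:
  assumes "subeigen lam" "lam' \<le> lam" shows "subeigen lam'"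
proof -
  obtain a where a: "a \<in> tvecs" "\<exists>l. a l \<noteq> -\<infinity>" "\<And>l. ereal lam + a l \<le> T a l"
    using assms(1) unfolding subeigen_def by blast
  have "ereal lam' + a l \<le> T a l" for l
    using a(3)[of l] add_right_mono[of "ereal lam'" "ereal lam" "a l"] assms(2) by (simp add: order_trans)
  then show ?thesis using a unfolding subeigen_def by blast
qed

lemma tvecs_below_real:
  fixes a :: "'n \<Rightarrow> ereal" and z :: "'n \<Rightarrow> real"
  assumes "a \<in> tvecs"
  obtains K where "\<And>l. a l \<le> ereal (z l + K)"
proof
  define K where "K = (MAX l. real_of_ereal (a l) - z l)"
  show "a l \<le> ereal (z l + K)" for l
  proof (cases "a l")
    case (real r)
    have "r - z l \<le> K" unfolding K_def using real by (intro Max_ge) (auto intro: image_eqI[of _ _ l])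
    then show ?thesis using real by simp
  qed (use assms in \<open>auto simp: tvecs_def\<close>)
qed

lemma tvecs_shift_below_touching:
  fixes a :: "'n \<Rightarrow> ereal" and z :: "'n \<Rightarrow> real"
  assumes "a \<in> tvecs" "\<exists>l. a l \<noteq> -\<infinity>"
  obtains c l0 where "\<And>l. ereal c + a l \<le> ereal (z l)" "ereal c + a l0 = ereal (z l0)"
proof -
  define S where "S = {l. a l \<noteq> -\<infinity>}"
  define f where "f l = z l - real_of_ereal (a l)" for l
  have a_real: "a l = ereal (real_of_ereal (a l))" if "l \<in> S" for l
    using that assms(1) by (cases "a l") (auto simp: S_def tvecs_def)
  have "S \<noteq> {}" using assms(2) by (auto simp: S_def)
  then have "Min (f ` S) \<in> f ` S" by (intro Min_in) auto
  then obtain l0 where l0: "l0 \<in> S" "Min (f ` S) = f l0" by blast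
  show ?thesis
  proof
    show "ereal (f l0) + a l \<le> ereal (z l)" for l
    proof (cases "l \<in> S")
      case True
      then have "f l0 \<le> f l" unfolding l0(2)[symmetric] by simp
      then show ?thesis by (subst a_real[OF True]) (simp add: f_def)
    qed (simp add: S_def)
    show "ereal (f l0) + a l0 = ereal (z l0)"
      by (subst a_real[OF l0(1)]) (simp add: f_def)
  qed
qed

lemma subeigen_le_supereigen:
  assumes "subeigen lam" "supereigen lam'" shows "lam \<le> lam'"
proof -
  obtain a where a: "a \<in> tvecs" "\<exists>l. a l \<noteq> -\<infinity>" "\<And>l. ereal lam + a l \<le> T a l"
    using assms(1) unfolding subeigen_def by blast
  obtain z where z: "\<And>l. T (\<lambda>k. ereal (z k)) l \<le> ereal lam' + ereal (z l)"
    using assms(2) unfolding supereigen_def by blast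
  obtain c l0 where below: "\<And>l. ereal c + a l \<le> ereal (z l)"
    and touch: "ereal c + a l0 = ereal (z l0)"
    using tvecs_shift_below_touching[OF a(1,2)] by blast
  have "ereal c + (ereal lam + a l0) \<le> ereal c + T a l0"
    using a(3) by (rule add_left_mono)
  also have "\<dots> = T (\<lambda>k. ereal c + a k) l0" by (simp add: T_add_const)
  also have "\<dots> \<le> T (\<lambda>k. ereal (z k)) l0" by (rule T_mono) (rule below)
  also have "\<dots> \<le> ereal lam' + ereal (z l0)" by (rule z)
  finally have "ereal lam + ereal (z l0) \<le> ereal lam' + ereal (z l0)"
    by (simp only: touch add.left_commute[of "ereal c"])
  then show ?thesis by simp
qed

lemma supereigen_vector_above:
  assumes "supereigen lam" "a \<in> tvecs"
  obtains z :: "'n \<Rightarrow> real"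
  where "\<And>l. T (\<lambda>k. ereal (z k)) l \<le> ereal lam + ereal (z l)" "\<And>l. a l \<le> ereal (z l)"
proof -
  obtain z0 where z0: "\<And>l. T (\<lambda>k. ereal (z0 k)) l \<le> ereal lam + ereal (z0 l)"
    using assms(1) unfolding supereigen_def by blast
  obtain K where K: "\<And>l. a l \<le> ereal (z0 l + K)" using tvecs_below_real[OF assms(2)] by blast
  have bound: "T (\<lambda>k. ereal (z0 k + K)) l \<le> ereal lam + ereal (z0 l + K)" for l
  proof -
    have "T (\<lambda>k. ereal (z0 k + K)) l = ereal K + T (\<lambda>k. ereal (z0 k)) l"
      by (subst T_add_const[symmetric]) (simp add: add.commute)
    also have "\<dots> \<le> ereal K + (ereal lam + ereal (z0 l))" using z0 by (rule add_left_mono)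
    finally show ?thesis by (simp add: ac_simps)
  qed
  show ?thesis by (rule that[of "\<lambda>k. z0 k + K", OF bound K])
qed

text \<open>The least fixed point, by Knaster--Tarski, of the monotone map
  \<open>u \<mapsto> max a (min z (T u - lam))\<close>.\<close>

lemma eigenvector_between:
  assumes az: "\<And>l. a l \<le> z l"
    and a: "\<And>l. ereal lam + a l \<le> T a l" and z: "\<And>l. T z l \<le> ereal lam + z l"
  obtains u where "\<And>l. a l \<le> u l" "\<And>l. u l \<le> z l" "\<And>l. T u l = ereal lam + u l"
proof -
  define \<Phi> where "\<Phi> u l = max (a l) (min (z l) (ereal (-lam) + T u l))" for u l
  have "mono \<Phi>"
  proof (rule monoI)
    fix u v :: "'n \<Rightarrow> ereal" assume "u \<le> v"
    then have "T u l \<le> T v l" for l by (intro T_mono) (simp add: le_fun_def)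
    then show "\<Phi> u \<le> \<Phi> v" unfolding \<Phi>_def le_fun_def
      by (intro allI max.mono min.mono order_refl add_left_mono)
  qed
  define u where "u = lfp \<Phi>"
  have u: "u = \<Phi> u" unfolding u_def by (rule lfp_unfold[OF \<open>mono \<Phi>\<close>])
  have au: "a l \<le> u l" for l by (subst u) (simp add: \<Phi>_def)
  have uz: "u l \<le> z l" for l by (subst u) (use az in \<open>auto simp: \<Phi>_def\<close>)
  have lower: "a l \<le> ereal (-lam) + T u l" for l
  proof -
    have "ereal lam + a l \<le> T u l" using a T_mono[of a u, OF au] order_trans by blast
    then have "ereal (-lam) + (ereal lam + a l) \<le> ereal (-lam) + T u l" by (rule add_left_mono)
    then show ?thesis by (simp only: ereal_uminus_add_cancel)
  qed
  have upper: "ereal (-lam) + T u l \<le> z l" for l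
  proof -
    have "T u l \<le> ereal lam + z l" using z T_mono[of u z, OF uz] order_trans by blast
    then have "ereal (-lam) + T u l \<le> ereal (-lam) + (ereal lam + z l)" by (rule add_left_mono)
    then show ?thesis by (simp only: ereal_uminus_add_cancel)
  qed
  have "u l = ereal (-lam) + T u l" for l
  proof -
    have "u l = \<Phi> u l" by (subst u) (rule refl)
    also have "\<dots> = ereal (-lam) + T u l"
      unfolding \<Phi>_def using lower[of l] upper[of l] by (simp only: min_absorb2 max_absorb2)
    finally show ?thesis .
  qed
  then have "T u l = ereal lam + u l" for l
    using ereal_uminus_add_cancel[of "-lam" "T u l"] by (metis minus_minus)
  then show ?thesis using that au uz by blast
qed

lemma eigenvector_of_subeigen_supereigen:
  assumes "subeigen lam" "supereigen lam"
  obtains u where "u \<in> tvecs" "\<exists>l. u l \<noteq> -\<infinity>" "\<And>l. T u l = ereal lam + u l"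
proof -
  obtain a where a: "a \<in> tvecs" "\<exists>l. a l \<noteq> -\<infinity>" "\<And>l. ereal lam + a l \<le> T a l"
    using assms(1) unfolding subeigen_def by blast
  obtain z where z: "\<And>l. T (\<lambda>k. ereal (z k)) l \<le> ereal lam + ereal (z l)"
    and az: "\<And>l. a l \<le> ereal (z l)"
    using assms(2) a(1) by (rule supereigen_vector_above) (rule that)
  obtain u where au: "\<And>l. a l \<le> u l" and uz: "\<And>l. u l \<le> ereal (z l)"
    and eig: "\<And>l. T u l = ereal lam + u l"
    using az a(3) z by (rule eigenvector_between) (rule that)
  have "u l \<noteq> \<infinity>" for l using uz[of l] by auto
  then have "u \<in> tvecs" by (simp add: tvecs_def)
  moreover obtain l where "a l \<noteq> -\<infinity>" using a(2) by blast
  then have "u l \<noteq> -\<infinity>" using au[of l] by auto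
  ultimately show ?thesis using that eig by blast
qed

end

section \<open>Tropical span and vertical intervals\<close>

context cone_bipartition
begin

text \<open>\<open>v\<close> witnesses coordinate \<open>l\<close> of \<open>x\<close> on \<open>K\<close> if the tropical multiple \<open>(x l - v l) + v\<close> of \<open>v\<close>
  stays below \<open>x\<close> on \<open>K\<close> and is equal to it at \<open>l\<close>.\<close>

definition witnessed_on :: "'n set \<Rightarrow> ('n \<Rightarrow> real) \<Rightarrow> 'n \<Rightarrow> bool" where
  "witnessed_on K x l \<longleftrightarrow> (\<exists>v\<in>V. v l \<noteq> -\<infinity> \<and> (\<forall>k\<in>K. v k + ereal (x l) \<le> v l + ereal (x k)))"

lemma witnessed_on_mono:
  assumes "witnessed_on K x l" "K' \<subseteq> K" "\<And>k. k \<in> K' \<Longrightarrow> x k - x l \<le> y k - y l"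
  shows "witnessed_on K' y l"
proof -
  obtain v where v: "v \<in> V" "v l \<noteq> -\<infinity>" "\<And>k. k \<in> K \<Longrightarrow> v k + ereal (x l) \<le> v l + ereal (x k)"
    using assms(1) unfolding witnessed_on_def by blast
  obtain b where b: "v l = ereal b" using v(1,2) by (rule V_entry_real)
  have "v k + ereal (y l) \<le> v l + ereal (y k)" if "k \<in> K'" for k
  proof (cases "v k")
    case (real a)
    then have "a + x l \<le> b + x k" using v(3)[of k] that assms(2) b by auto
    then show ?thesis using assms(3)[OF that] real b by simp
  qed (use V_ne_top[OF v(1)] in auto)
  then show ?thesis using v(1,2) unfolding witnessed_on_def by blast
qed

lemma witnessed_in_trop_span:
  assumes "\<And>l. witnessed_on UNIV x l"
  shows "(\<lambda>l. ereal (x l)) \<in> trop_span V"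
proof -
  define \<alpha> where "\<alpha> v = (INF k. ereal (x k) - v k)" for v :: "'n \<Rightarrow> ereal"
  have \<alpha>_ne_top: "\<alpha> v \<noteq> \<infinity>" if v: "v \<in> V" for v
  proof -
    obtain k where k: "v k \<noteq> -\<infinity>" using V_nonzero v by blast
    obtain a where a: "v k = ereal a" using v k by (rule V_entry_real)
    have "\<alpha> v \<le> ereal (x k) - v k" unfolding \<alpha>_def by (rule INF_lower) simp
    then show ?thesis using a by auto
  qed
  have "ereal (x l) = (SUP v\<in>V. \<alpha> v + v l)" for l
  proof (rule antisym)
    obtain v where v: "v \<in> V" "v l \<noteq> -\<infinity>" "\<And>k. v k + ereal (x l) \<le> v l + ereal (x k)"
      using assms[of l] unfolding witnessed_on_def by blast
    obtain b where b: "v l = ereal b" using v(1,2) by (rule V_entry_real)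
    have "ereal (x l - b) \<le> \<alpha> v" unfolding \<alpha>_def
    proof (rule INF_greatest)
      fix k
      show "ereal (x l - b) \<le> ereal (x k) - v k"
        using v(3)[of k] b V_ne_top[OF v(1), of k] by (cases "v k") auto
    qed
    then have "ereal (x l) \<le> \<alpha> v + v l" using b by (cases "\<alpha> v") auto
    also have "\<dots> \<le> (SUP v\<in>V. \<alpha> v + v l)" using v(1) by (rule SUP_upper)
    finally show "ereal (x l) \<le> (SUP v\<in>V. \<alpha> v + v l)" .
    show "(SUP v\<in>V. \<alpha> v + v l) \<le> ereal (x l)"
    proof (rule SUP_least)
      fix w assume w: "w \<in> V"
      have "\<alpha> w \<le> ereal (x l) - w l" unfolding \<alpha>_def by (rule INF_lower) simp
      then show "\<alpha> w + w l \<le> ereal (x l)"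
        using \<alpha>_ne_top[OF w] V_ne_top[OF w, of l] by (cases "\<alpha> w"; cases "w l") auto
    qed
  qed
  then have "(\<lambda>l. ereal (x l)) = (\<lambda>l. SUP v\<in>V. \<alpha> v + v l)" by (rule ext)
  then show ?thesis using \<alpha>_ne_top unfolding trop_span_def by blast
qed

lemma trop_span_witnessed:
  assumes "(\<lambda>l. ereal (x l)) \<in> trop_span V"
  shows "witnessed_on UNIV x l"
proof -
  obtain \<alpha> where \<alpha>1: "\<forall>v\<in>V. \<alpha> v \<noteq> \<infinity>"
    and \<alpha>2: "(\<lambda>l. ereal (x l)) = (\<lambda>l. SUP v\<in>V. \<alpha> v + v l)"
    using assms unfolding trop_span_def by blast
  have \<alpha>: "\<forall>v\<in>V. \<alpha> v \<noteq> \<infinity>" "\<And>k. ereal (x k) = (SUP v\<in>V. \<alpha> v + v k)"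
    using \<alpha>1 fun_cong[OF \<alpha>2] by auto
  have "V \<noteq> {}" using V_covers by blast
  then obtain v where v: "v \<in> V" "(SUP v\<in>V. \<alpha> v + v l) = \<alpha> v + v l"
    by (rule finite_SUP_attained[OF finite_V])
  have eq: "\<alpha> v + v l = ereal (x l)" using v \<alpha>(2)[of l] by simp
  obtain a b where a: "\<alpha> v = ereal a" and b: "v l = ereal b"
    using eq \<alpha>(1) v(1) V_ne_top[OF v(1), of l] by (cases "\<alpha> v"; cases "v l") auto
  have "v k + ereal (x l) \<le> v l + ereal (x k)" for k
  proof -
    have "\<alpha> v + v k \<le> ereal (x k)" using \<alpha>(2)[of k] SUP_upper[OF v(1), of "\<lambda>v. \<alpha> v + v k"] by simp
    then show ?thesis using eq a b by (cases "v k") auto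
  qed
  then show ?thesis using v(1) b unfolding witnessed_on_def by force
qed

lemma real_in_trop_span_iff:
  "(\<lambda>l. ereal (x l)) \<in> trop_span V \<longleftrightarrow> (\<forall>l. witnessed_on UNIV x l)"
  using witnessed_in_trop_span trop_span_witnessed by blast

text \<open>Up to an additive constant, \<open>lower_opp r c l\<close> is the endpoint \<open>c - r e\<^sup>J\<close> (for \<open>l \<in> I\<close>) or
  \<open>c + r e\<^sup>J\<close> (for \<open>l \<in> J\<close>) of the vertical interval \<open>B\<^sub>I\<^sub>J(c, r)\<close> that is hardest to attain at \<open>l\<close>.\<close>

definition lower_opp :: "real \<Rightarrow> ('n \<Rightarrow> real) \<Rightarrow> 'n \<Rightarrow> 'n \<Rightarrow> real" where
  "lower_opp r c l k = c k - (if k \<in> opp_block l then r else 0)"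

lemma lower_opp_self [simp]: "lower_opp r c l l = c l"
  using I_disj_J by (auto simp: lower_opp_def opp_block_def)

lemma vert_int_subset_trop_span_iff:
  assumes "0 \<le> r"
  shows "vert_int J c (ereal r) \<subseteq> trop_span V \<longleftrightarrow> (\<forall>l. witnessed_on UNIV (lower_opp r c l) l)"
proof -
  define e where "e k = (if k \<in> J then 1 else 0 :: real)" for k
  define pt where "pt lam mu k = lam + c k + mu * e k" for lam mu :: real and k
  have vert_int_eq: "vert_int J c (ereal r) = {(\<lambda>k. ereal (pt lam mu k)) | lam mu. - r \<le> mu \<and> mu \<le> r}"
    by (simp add: vert_int_def pt_def e_def)
  have gap: "lower_opp r c l k - lower_opp r c l l \<le> pt lam mu k - pt lam mu l"
    if "- r \<le> mu" "mu \<le> r" for lam mu l k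
    using that I_union_J I_disj_J by (auto simp: lower_opp_def pt_def e_def in_opp_block_iff)
  have tight: "pt 0 (if l \<in> J then r else -r) k - pt 0 (if l \<in> J then r else -r) l
      \<le> lower_opp r c l k - lower_opp r c l l" for l k
    using I_union_J I_disj_J by (auto simp: lower_opp_def pt_def e_def in_opp_block_iff)
  show ?thesis
  proof
    assume sub: "vert_int J c (ereal r) \<subseteq> trop_span V"
    show "\<forall>l. witnessed_on UNIV (lower_opp r c l) l"
    proof
      fix l
      define mu where "mu = (if l \<in> J then r else -r)"
      have "(\<lambda>k. ereal (pt 0 mu k)) \<in> vert_int J c (ereal r)"
        unfolding vert_int_eq using assms by (intro CollectI exI[of _ 0] exI[of _ mu]) (auto simp: mu_def)
      with sub have "(\<lambda>k. ereal (pt 0 mu k)) \<in> trop_span V" by blast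
      then have "witnessed_on UNIV (pt 0 mu) l" by (simp add: real_in_trop_span_iff)
      then show "witnessed_on UNIV (lower_opp r c l) l"
        by (rule witnessed_on_mono) (use tight in \<open>auto simp: mu_def\<close>)
    qed
  next
    assume wit: "\<forall>l. witnessed_on UNIV (lower_opp r c l) l"
    show "vert_int J c (ereal r) \<subseteq> trop_span V"
    proof (clarsimp simp: vert_int_eq real_in_trop_span_iff)
      fix lam mu l assume "- r \<le> mu" "mu \<le> r"
      with wit gap show "witnessed_on UNIV (pt lam mu) l" by (blast intro: witnessed_on_mono)
    qed
  qed
qed

lemma T_le_iff_witnessed_on_opp:
  "T (\<lambda>k. ereal (- c k)) l \<le> ereal (- r) + ereal (- c l)
     \<longleftrightarrow> witnessed_on (opp_block l) (lower_opp r c l) l"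
proof
  assume T_le_c: "T (\<lambda>k. ereal (- c k)) l \<le> ereal (- r) + ereal (- c l)"
  obtain v where v: "v \<in> V_at l" "T (\<lambda>k. ereal (- c k)) l = - v l + (SUP k\<in>opp_block l. v k + ereal (- c k))"
    by (rule T_attained)
  then have vV: "v \<in> V" "v l \<noteq> -\<infinity>" by (auto simp: V_at_def)
  obtain b where b: "v l = ereal b" using vV by (rule V_entry_real)
  have "v k + ereal (c l) \<le> v l + ereal (lower_opp r c l k)" if k: "k \<in> opp_block l" for k
  proof -
    have "- v l + (v k + ereal (- c k)) \<le> - v l + (SUP k\<in>opp_block l. v k + ereal (- c k))"
      using k by (intro add_left_mono SUP_upper)
    also have "\<dots> \<le> ereal (- r) + ereal (- c l)" using T_le_c v(2) by simp
    finally show ?thesis using k b V_ne_top[OF vV(1), of k] by (cases "v k") (auto simp: lower_opp_def)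
  qed
  then show "witnessed_on (opp_block l) (lower_opp r c l) l"
    using vV unfolding witnessed_on_def by auto
next
  assume "witnessed_on (opp_block l) (lower_opp r c l) l"
  then obtain v where vV: "v \<in> V" "v l \<noteq> -\<infinity>"
    and v: "\<And>k. k \<in> opp_block l \<Longrightarrow> v k + ereal (c l) \<le> v l + ereal (lower_opp r c l k)"
    unfolding witnessed_on_def by auto
  obtain b where b: "v l = ereal b" using vV by (rule V_entry_real)
  have "T (\<lambda>k. ereal (- c k)) l \<le> - v l + (SUP k\<in>opp_block l. v k + ereal (- c k))"
    using vV by (intro T_le) (simp add: V_at_def)
  also have "\<dots> \<le> - v l + ereal (b - r - c l)"
  proof (intro add_left_mono SUP_least)
    fix k assume k: "k \<in> opp_block l"
    show "v k + ereal (- c k) \<le> ereal (b - r - c l)"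
      using v[OF k] k b V_ne_top[OF vV(1), of k] by (cases "v k") (auto simp: lower_opp_def)
  qed
  also have "\<dots> = ereal (- r) + ereal (- c l)" using b by simp
  finally show "T (\<lambda>k. ereal (- c k)) l \<le> ereal (- r) + ereal (- c l)" .
qed

lemma supereigen_iff_witnessed_on_opp:
  "supereigen (- r) \<longleftrightarrow> (\<exists>c. \<forall>l. witnessed_on (opp_block l) (lower_opp r c l) l)"
proof -
  have "supereigen (- r) \<longleftrightarrow> (\<exists>c. \<forall>l. T (\<lambda>k. ereal (- c k)) l \<le> ereal (- r) + ereal (- c l))"
  proof
    assume "supereigen (- r)"
    then obtain z where "\<forall>l. T (\<lambda>k. ereal (z k)) l \<le> ereal (- r) + ereal (z l)"
      unfolding supereigen_def by blast
    then show "\<exists>c. \<forall>l. T (\<lambda>k. ereal (- c k)) l \<le> ereal (- r) + ereal (- c l)"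
      by (intro exI[of _ "\<lambda>k. - z k"]) simp
  next
    assume "\<exists>c. \<forall>l. T (\<lambda>k. ereal (- c k)) l \<le> ereal (- r) + ereal (- c l)"
    then obtain c where "\<forall>l. T (\<lambda>k. ereal (- c k)) l \<le> ereal (- r) + ereal (- c l)" by blast
    then show "supereigen (- r)" unfolding supereigen_def by (intro exI[of _ "\<lambda>k. - c k"])
  qed
  then show ?thesis by (simp only: T_le_iff_witnessed_on_opp)
qed

text \<open>The tropical projection of a real vector \<open>y\<close> onto \<open>Span V\<close>: every \<open>v\<close> is scaled by the
  largest coefficient keeping it below \<open>y\<close>, and the scaled vectors are combined by \<open>max\<close>.\<close>

definition proj_coeff :: "('n \<Rightarrow> real) \<Rightarrow> ('n \<Rightarrow> ereal) \<Rightarrow> real" where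
  "proj_coeff y v = Min ((\<lambda>k. y k - real_of_ereal (v k)) ` {k. v k \<noteq> -\<infinity>})"

definition trop_proj :: "('n \<Rightarrow> real) \<Rightarrow> 'n \<Rightarrow> real" where
  "trop_proj y l = Max ((\<lambda>v. proj_coeff y v + real_of_ereal (v l)) ` V_at l)"

lemma proj_coeff_le:
  assumes "v k \<noteq> -\<infinity>" shows "proj_coeff y v + real_of_ereal (v k) \<le> y k"
proof -
  have "proj_coeff y v \<le> y k - real_of_ereal (v k)" unfolding proj_coeff_def using assms by (intro Min_le) auto
  then show ?thesis by simp
qed

lemma le_proj_coeff:
  "v l \<noteq> -\<infinity> \<Longrightarrow> (\<And>k. v k \<noteq> -\<infinity> \<Longrightarrow> t + real_of_ereal (v k) \<le> y k) \<Longrightarrow> t \<le> proj_coeff y v"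
  unfolding proj_coeff_def by (intro Min.boundedI) (auto simp: algebra_simps)

lemma proj_coeff_le_trop_proj: "v \<in> V_at l \<Longrightarrow> proj_coeff y v + real_of_ereal (v l) \<le> trop_proj y l"
  unfolding trop_proj_def using finite_V_at by (intro Max_ge) auto

lemma trop_proj_attained:
  obtains v where "v \<in> V_at l" "trop_proj y l = proj_coeff y v + real_of_ereal (v l)"
proof -
  have "trop_proj y l \<in> (\<lambda>v. proj_coeff y v + real_of_ereal (v l)) ` V_at l"
    unfolding trop_proj_def using finite_V_at V_at_ne by (intro Max_in) auto
  then show ?thesis using that by blast
qed

lemma trop_proj_witnessed:
  obtains v where "v \<in> V_at l"
    "\<And>k. v k + ereal (trop_proj y l) \<le> v l + ereal (y k)"
    "\<And>k. v k + ereal (trop_proj y l) \<le> v l + ereal (trop_proj y k)"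
proof -
  obtain v where v: "v \<in> V_at l" and pl: "trop_proj y l = proj_coeff y v + real_of_ereal (v l)"
    by (rule trop_proj_attained)
  then have vV: "v \<in> V" "v l \<noteq> -\<infinity>" by (auto simp: V_at_def)
  have bound: "v k + ereal (trop_proj y l) \<le> v l + ereal b"
    if "v k \<noteq> -\<infinity> \<Longrightarrow> proj_coeff y v + real_of_ereal (v k) \<le> b" for k b
  proof (cases "v k = -\<infinity>")
    case False
    then show ?thesis using that pl
      by (subst (1 2) V_entry_eq_real[OF vV(1)]) (use vV(2) in auto)
  qed simp
  show ?thesis
  proof (rule that[OF v])
    show "v k + ereal (trop_proj y l) \<le> v l + ereal (y k)" for k
      by (rule bound) (rule proj_coeff_le)
    show "v k + ereal (trop_proj y l) \<le> v l + ereal (trop_proj y k)" for k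
      by (rule bound) (use vV(1) in \<open>auto simp: V_at_def intro: proj_coeff_le_trop_proj\<close>)
  qed
qed

text \<open>Raising \<open>x\<close> on \<open>S\<close> to the projection of the vector that is \<open>x\<close> off \<open>S\<close> and a large
  constant \<open>C\<close> on \<open>S\<close>: maximisers in the projection are witnesses everywhere, and the given
  witnesses together with the choice of \<open>C\<close> keep the projection above \<open>x\<close> on \<open>S\<close>.\<close>

lemma witnessed_raise:
  assumes wit: "\<And>l. l \<in> S \<Longrightarrow> witnessed_on (- S) x l"
  obtains x' where "\<And>k. k \<notin> S \<Longrightarrow> x' k = x k" "\<And>k. x k \<le> x' k"
    "\<And>l. l \<in> S \<Longrightarrow> witnessed_on UNIV x' l"
proof -
  define C where "C = Max ((\<lambda>(v, l, k). x l - real_of_ereal (v l) + real_of_ereal (v k)) ` (V \<times> UNIV \<times> UNIV))"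
  have C: "x l - real_of_ereal (v l) + real_of_ereal (v k) \<le> C" if "v \<in> V" for v l k
    unfolding C_def using finite_V that by (intro Max_ge) (auto intro: image_eqI[of _ _ "(v, l, k)"])
  define y where "y k = (if k \<in> S then C else x k)" for k
  define x' where "x' k = (if k \<in> S then trop_proj y k else x k)" for k
  have x_le: "x l \<le> trop_proj y l" if l: "l \<in> S" for l
  proof -
    obtain v where v: "v \<in> V" "v l \<noteq> -\<infinity>"
      and v_opp: "\<And>k. k \<notin> S \<Longrightarrow> v k + ereal (x l) \<le> v l + ereal (x k)"
      using wit[OF l] unfolding witnessed_on_def by auto
    have "x l - real_of_ereal (v l) \<le> proj_coeff y v"
    proof (rule le_proj_coeff[of v l, OF v(2)])
      fix k assume k: "v k \<noteq> -\<infinity>"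
      show "x l - real_of_ereal (v l) + real_of_ereal (v k) \<le> y k"
      proof (cases "k \<in> S")
        case False
        then show ?thesis using v_opp[OF False]
          by (subst (asm) (1 2) V_entry_eq_real[OF v(1)]) (use v(2) k in \<open>auto simp: y_def\<close>)
      qed (use C[OF v(1), of l k] in \<open>simp add: y_def\<close>)
    qed
    then show ?thesis using proj_coeff_le_trop_proj[of v l y] v by (simp add: V_at_def)
  qed
  show ?thesis
  proof
    show "x' k = x k" if "k \<notin> S" for k using that by (simp add: x'_def)
    show "x k \<le> x' k" for k using x_le by (simp add: x'_def)
    show "witnessed_on UNIV x' l" if l: "l \<in> S" for l
    proof -
      obtain v where v: "v \<in> V_at l"
        and le_y: "\<And>k. v k + ereal (trop_proj y l) \<le> v l + ereal (y k)"
        and le_proj: "\<And>k. v k + ereal (trop_proj y l) \<le> v l + ereal (trop_proj y k)"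
        by (rule trop_proj_witnessed) (rule that)
      have "v k + ereal (x' l) \<le> v l + ereal (x' k)" for k
        using le_y[of k] le_proj[of k] l by (cases "k \<in> S") (simp_all add: x'_def y_def)
      then show ?thesis using v unfolding witnessed_on_def V_at_def by auto
    qed
  qed
qed

lemma witnessed_lower_opp_mono:
  assumes "witnessed_on K (lower_opp r c l) l" "\<And>k. c k \<le> c' k" "c' l = c l"
  shows "witnessed_on K (lower_opp r c' l) l"
  using assms(1) by (rule witnessed_on_mono) (use assms(2,3) in \<open>auto simp: lower_opp_def\<close>)

lemma complete_block:
  assumes wit: "\<And>l. witnessed_on (opp_block l) (lower_opp r c l) l"
    and B: "B = I \<or> B = J"
  obtains c' where "\<And>k. c k \<le> c' k" "\<And>k. k \<notin> B \<Longrightarrow> c' k = c k"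
    "\<And>l. witnessed_on (opp_block l) (lower_opp r c' l) l"
    "\<And>l. l \<in> B \<Longrightarrow> witnessed_on UNIV (lower_opp r c' l) l"
proof -
  have opp_B: "opp_block l = - B" if "l \<in> B" for l
    using B that by (rule opp_block_eq_Compl)
  have lower_B: "lower_opp r d l = (\<lambda>k. d k - (if k \<in> B then 0 else r))" if "l \<in> B" for d l
    using opp_B[OF that] by (auto simp: lower_opp_def)
  define x where "x = (\<lambda>k. c k - (if k \<in> B then 0 else r))"
  have "witnessed_on (- B) x l" if "l \<in> B" for l
    using wit[of l] by (simp only: lower_B[OF that] opp_B[OF that] x_def[symmetric])
  then obtain x' where x': "\<And>k. k \<notin> B \<Longrightarrow> x' k = x k" "\<And>k. x k \<le> x' k"
    "\<And>l. l \<in> B \<Longrightarrow> witnessed_on UNIV x' l"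
    by (rule witnessed_raise) auto
  define c' where "c' k = x' k + (if k \<in> B then 0 else r)" for k
  have c'_B: "lower_opp r c' l = x'" if "l \<in> B" for l
    using lower_B[OF that] by (simp add: c'_def)
  show ?thesis
  proof
    show c_le: "c k \<le> c' k" for k using x'(2)[of k] by (simp add: x_def c'_def)
    show c_eq: "c' k = c k" if "k \<notin> B" for k using x'(1)[OF that] that by (simp add: x_def c'_def)
    show full: "witnessed_on UNIV (lower_opp r c' l) l" if "l \<in> B" for l
      using x'(3)[OF that] c'_B[OF that] by simp
    show "witnessed_on (opp_block l) (lower_opp r c' l) l" for l
    proof (cases "l \<in> B")
      case True
      show ?thesis using full[OF True] by (rule witnessed_on_mono) auto
    next
      case False
      then show ?thesis using wit c_le c_eq by (blast intro: witnessed_lower_opp_mono)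
    qed
  qed
qed

lemma supereigen_imp_vert_int:
  assumes "supereigen (- r)" "0 \<le> r"
  obtains c where "vert_int J c (ereal r) \<subseteq> trop_span V"
proof -
  obtain c0 where "\<And>l. witnessed_on (opp_block l) (lower_opp r c0 l) l"
    using assms(1) unfolding supereigen_iff_witnessed_on_opp by blast
  then obtain c1 where c1: "\<And>l. witnessed_on (opp_block l) (lower_opp r c1 l) l"
    "\<And>l. l \<in> I \<Longrightarrow> witnessed_on UNIV (lower_opp r c1 l) l"
    by (rule complete_block[where B = I]) auto
  obtain c2 where c2: "\<And>k. c1 k \<le> c2 k" "\<And>k. k \<notin> J \<Longrightarrow> c2 k = c1 k"
    "\<And>l. l \<in> J \<Longrightarrow> witnessed_on UNIV (lower_opp r c2 l) l"
    using c1(1) by (rule complete_block[where B = J]) auto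
  have "witnessed_on UNIV (lower_opp r c2 l) l" for l
  proof (cases "l \<in> J")
    case False
    then have "l \<in> I" using I_union_J by blast
    then show ?thesis using c1(2) c2(1,2) False by (blast intro: witnessed_lower_opp_mono)
  qed (rule c2(3))
  then show ?thesis using that vert_int_subset_trop_span_iff[OF assms(2)] by blast
qed

lemma vert_int_imp_supereigen:
  assumes "vert_int J c (ereal r) \<subseteq> trop_span V" "0 \<le> r"
  shows "supereigen (- r)"
proof -
  have "witnessed_on (opp_block l) (lower_opp r c l) l" for l
    using assms vert_int_subset_trop_span_iff by (blast intro: witnessed_on_mono)
  then show ?thesis unfolding supereigen_iff_witnessed_on_opp by blast
qed

end

section \<open>Distance to tropical hyperplanes\<close>

lemma hilbert_d_le:
  assumes "\<And>k. ereal mu + y k \<le> v k" "\<And>k. v k \<le> ereal la + y k"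
  shows "hilbert_d v y \<le> ereal (la - mu)"
  unfolding hilbert_d_def by (rule Inf_lower) (use assms in blast)

lemma trop_hyp_swap: "trop_hyp I J a = trop_hyp J I a"
  by (auto simp: trop_hyp_def)

text \<open>Shifting the block \<open>S2\<close> of \<open>v\<close> up by \<open>P - Q\<close> balances the two maxima.\<close>

lemma INF_hilbert_d_trop_hyp_le:
  fixes a v :: "'n \<Rightarrow> ereal"
  assumes "S1 \<inter> S2 = {}" "S2 \<noteq> {}" "v \<in> tvecs"
    and P: "(SUP k\<in>S1. a k + v k) = ereal P" and Q: "(SUP k\<in>S2. a k + v k) = ereal Q"
    and "Q \<le> P"
  shows "(INF y\<in>trop_hyp S1 S2 a. hilbert_d v y) \<le> ereal (P - Q)"
proof -
  define y where "y k = (if k \<in> S2 then v k + ereal (P - Q) else v k)" for k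
  have "(SUP k\<in>S1. a k + y k) = (SUP k\<in>S1. a k + v k)"
    by (rule SUP_cong) (use assms(1) in \<open>auto simp: y_def\<close>)
  moreover have "(SUP k\<in>S2. a k + y k) = (SUP k\<in>S2. ereal (P - Q) + (a k + v k))"
    by (rule SUP_cong) (auto simp: y_def ac_simps)
  moreover have "\<dots> = ereal P"
    using SUP_ereal_add_real[OF assms(2)] Q by simp
  moreover have "y \<in> tvecs" using assms(3) by (auto simp: y_def tvecs_def)
  ultimately have "y \<in> trop_hyp S1 S2 a" using P by (simp add: trop_hyp_def)
  moreover have "hilbert_d v y \<le> ereal (0 - - (P - Q))"
  proof (rule hilbert_d_le)
    show "ereal (- (P - Q)) + y k \<le> v k" for k
      using \<open>Q \<le> P\<close> by (cases "v k") (auto simp: y_def)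
    show "v k \<le> ereal 0 + y k" for k
      using \<open>Q \<le> P\<close> by (cases "v k") (auto simp: y_def)
  qed
  ultimately show ?thesis by (auto intro: INF_lower2)
qed

lemma INF_hilbert_d_trop_hyp_le_balanced:
  fixes a v :: "'n::finite \<Rightarrow> ereal"
  assumes IJ: "I \<inter> J = {}" "I \<noteq> {}" "J \<noteq> {}" and "v \<in> tvecs" "a \<in> tvecs" "lam \<le> 0"
    and pq: "ereal lam + (SUP k\<in>I. a k + v k) \<le> (SUP k\<in>J. a k + v k)"
    and qp: "ereal lam + (SUP k\<in>J. a k + v k) \<le> (SUP k\<in>I. a k + v k)"
  shows "(INF y\<in>trop_hyp I J a. hilbert_d v y) \<le> ereal (- lam)"
proof -
  define p where "p = (SUP k\<in>I. a k + v k)"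
  define q where "q = (SUP k\<in>J. a k + v k)"
  have "p \<noteq> \<infinity>" "q \<noteq> \<infinity>" unfolding p_def q_def
    using IJ tvecs_add_ne_top[OF \<open>a \<in> tvecs\<close> \<open>v \<in> tvecs\<close>] by (simp_all add: SUP_finite_less_top)
  show ?thesis
  proof (cases "p = -\<infinity>")
    case True
    then have "q = -\<infinity>" using qp \<open>q \<noteq> \<infinity>\<close> by (cases q) (auto simp: p_def q_def)
    with True have "v \<in> trop_hyp I J a" using \<open>v \<in> tvecs\<close> by (simp add: trop_hyp_def p_def q_def)
    then have "(INF y\<in>trop_hyp I J a. hilbert_d v y) \<le> hilbert_d v v" by (rule INF_lower)
    also have "\<dots> \<le> ereal (0 - 0)" by (rule hilbert_d_le) auto
    finally show ?thesis using \<open>lam \<le> 0\<close> by (simp add: order_trans)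
  next
    case False
    then obtain P where P: "p = ereal P" using \<open>p \<noteq> \<infinity>\<close> by (cases p) auto
    then have "q \<noteq> -\<infinity>" using pq by (auto simp: p_def q_def)
    then obtain Q where Q: "q = ereal Q" using \<open>q \<noteq> \<infinity>\<close> by (cases q) auto
    have "lam + P \<le> Q" "lam + Q \<le> P" using pq qp P Q by (simp_all add: p_def q_def)
    show ?thesis
    proof (cases "Q \<le> P")
      case True
      have "(INF y\<in>trop_hyp I J a. hilbert_d v y) \<le> ereal (P - Q)"
        using IJ(1,3) \<open>v \<in> tvecs\<close> P[unfolded p_def] Q[unfolded q_def] True
        by (rule INF_hilbert_d_trop_hyp_le)
      then show ?thesis using \<open>lam + P \<le> Q\<close> by (simp add: order_trans)
    next
      case False
      have "(INF y\<in>trop_hyp J I a. hilbert_d v y) \<le> ereal (Q - P)"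
        using IJ \<open>v \<in> tvecs\<close> Q[unfolded q_def] P[unfolded p_def] False
        by (intro INF_hilbert_d_trop_hyp_le) auto
      then show ?thesis using \<open>lam + Q \<le> P\<close> by (simp add: trop_hyp_swap order_trans)
    qed
  qed
qed

context cone_bipartition
begin

lemma subeigen_SUP_block_le:
  assumes a: "a \<in> tvecs" and sub: "\<And>l. ereal lam + a l \<le> T a l" and v: "v \<in> V"
    and B: "B = I \<or> B = J"
  shows "ereal lam + (SUP k\<in>B. a k + v k) \<le> (SUP k\<in>- B. a k + v k)"
proof -
  have "B \<noteq> {}" using B I_ne J_ne by blast
  then have "ereal lam + (SUP k\<in>B. a k + v k) = (SUP i\<in>B. ereal lam + (a i + v i))"
    by (rule SUP_ereal_add_real[symmetric])
  also have "\<dots> \<le> (SUP k\<in>- B. a k + v k)"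
  proof (rule SUP_least)
    fix i assume i: "i \<in> B"
    show "ereal lam + (a i + v i) \<le> (SUP k\<in>- B. a k + v k)"
    proof (cases "a i = -\<infinity> \<or> v i = -\<infinity>")
      case True
      have "a i \<noteq> \<infinity>" "v i \<noteq> \<infinity>" using a V_ne_top[OF v] by (auto simp: tvecs_def)
      with True have "a i + v i = -\<infinity>" by (cases "a i"; cases "v i") auto
      then show ?thesis by (simp only:) simp
    next
      case False
      then have vi: "v \<in> V_at i" using v by (simp add: V_at_def)
      obtain b where b: "v i = ereal b" using v False by (blast elim: V_entry_real)
      have "ereal lam + a i \<le> - v i + (SUP k\<in>- B. v k + a k)"
        using sub[of i] T_le[OF vi, of a] opp_block_eq_Compl[OF B i] by (simp add: order_trans)
      then have "ereal lam + a i + v i \<le> - v i + (SUP k\<in>- B. v k + a k) + v i"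
        by (rule add_right_mono)
      also have "\<dots> = (SUP k\<in>- B. v k + a k)"
        using b by (cases "SUP k\<in>- B. v k + a k") auto
      finally show ?thesis by (simp add: ac_simps)
    qed
  qed
  finally show ?thesis .
qed

lemma dist_H_trop_hyp_le:
  assumes a: "a \<in> tvecs" and "lam \<le> 0" and sub: "\<And>l. ereal lam + a l \<le> T a l"
  shows "dist_H V (trop_hyp I J a) \<le> ereal (- lam)"
  unfolding dist_H_def
proof (rule SUP_least)
  fix v assume v: "v \<in> V"
  have "- J = I" "- I = J" using I_union_J I_disj_J by auto
  then show "(INF y\<in>trop_hyp I J a. hilbert_d v y) \<le> ereal (- lam)"
    using subeigen_SUP_block_le[OF a sub v, of I] subeigen_SUP_block_le[OF a sub v, of J]
      V_tvecs v I_disj_J I_ne J_ne a \<open>lam \<le> 0\<close>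
    by (intro INF_hilbert_d_trop_hyp_le_balanced) auto
qed

lemma trop_hyp_le_SUP_opp_block:
  assumes "y \<in> trop_hyp I J a"
  shows "a l + y l \<le> (SUP k\<in>opp_block l. a k + y k)"
proof -
  have "(SUP k\<in>opp_block l. a k + y k) = (SUP k\<in>(if l \<in> I then I else J). a k + y k)"
    using assms by (auto simp: trop_hyp_def opp_block_def)
  also have "a l + y l \<le> \<dots>" using I_union_J by (intro SUP_upper) auto
  finally show ?thesis .
qed

text \<open>If \<open>v\<close> is within Hilbert distance \<open>s\<close> of a point \<open>y\<close> of the hyperplane, the maximum of
  \<open>a + y\<close> over the block opposite to \<open>l\<close> dominates \<open>a l + y l\<close>, and transferring this to \<open>v\<close>
  loses less than \<open>s\<close>.\<close>

lemma close_to_trop_hyp_imp_bound: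
  assumes y: "y \<in> trop_hyp I J a" and v: "v \<in> V_at l" and A: "a l = ereal A"
    and d: "hilbert_d v y < ereal s"
  shows "ereal (- s) + a l \<le> - v l + (SUP k\<in>opp_block l. v k + a k)"
proof -
  obtain b where b: "v l = ereal b" using v by (auto simp: V_at_def elim: V_entry_real)
  obtain la mu where "la - mu < s"
    and bnd: "\<And>k. ereal mu + y k \<le> v k" "\<And>k. v k \<le> ereal la + y k"
    using d unfolding hilbert_d_def Inf_less_iff by auto
  have "y l \<noteq> \<infinity>" using y by (auto simp: trop_hyp_def tvecs_def)
  then have "ereal (A + (b - la)) \<le> a l + y l"
    using A b bnd(2)[of l] by (cases "y l") auto
  also have "\<dots> \<le> (SUP k\<in>opp_block l. a k + y k)" using y by (rule trop_hyp_le_SUP_opp_block)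
  finally have "ereal mu + ereal (A + (b - la)) \<le> ereal mu + (SUP k\<in>opp_block l. a k + y k)"
    by (rule add_left_mono)
  also have "\<dots> = (SUP k\<in>opp_block l. a k + (ereal mu + y k))"
    using SUP_ereal_add_real[OF opp_block_ne, of mu "\<lambda>k. a k + y k"] by (simp add: ac_simps)
  also have "\<dots> \<le> (SUP k\<in>opp_block l. a k + v k)"
    using bnd(1) by (intro SUP_mono' add_left_mono)
  finally have "- v l + ereal (mu + (A + (b - la))) \<le> - v l + (SUP k\<in>opp_block l. v k + a k)"
    by (simp add: add_left_mono ac_simps)
  moreover have "ereal (- s) + a l \<le> - v l + ereal (mu + (A + (b - la)))"
    using A b \<open>la - mu < s\<close> by simp
  ultimately show ?thesis by (rule order_trans[rotated])
qed

lemma dist_H_less_imp_subeigen: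
  assumes a: "a \<in> tvecs" and d: "dist_H V (trop_hyp I J a) < ereal s"
  shows "ereal (- s) + a l \<le> T a l"
proof (cases "a l")
  case (real A)
  show ?thesis unfolding T_eq
  proof (rule INF_greatest)
    fix v assume v: "v \<in> V_at l"
    have "(INF y\<in>trop_hyp I J a. hilbert_d v y) < ereal s"
      using d SUP_upper[of v V "\<lambda>v. INF y\<in>trop_hyp I J a. hilbert_d v y"] v
      unfolding dist_H_def V_at_def by (auto intro: le_less_trans)
    then obtain y where "y \<in> trop_hyp I J a" "hilbert_d v y < ereal s"
      by (auto simp: INF_less_iff)
    then show "ereal (- s) + a l \<le> - v l + (SUP k\<in>opp_block l. v k + a k)"
      using v real by (intro close_to_trop_hyp_imp_bound)
  qed
qed (use a in \<open>auto simp: tvecs_def\<close>)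

end

section \<open>Exponential coordinates and Brouwer's fixed point theorem\<close>

text \<open>\<open>eexp\<close> is \<open>exp\<close> extended by \<open>eexp (-\<infinity>) = 0\<close>; the value at \<open>\<infinity>\<close> is junk and never used.\<close>

definition eexp :: "ereal \<Rightarrow> real" where
  "eexp x = (case x of ereal r \<Rightarrow> exp r | _ \<Rightarrow> 0)"

definition eln :: "real \<Rightarrow> ereal" where
  "eln y = (if y \<le> 0 then -\<infinity> else ereal (ln y))"

lemma eexp_simps [simp]: "eexp (ereal r) = exp r" "eexp (-\<infinity>) = 0"
  by (auto simp: eexp_def)

lemma eexp_nonneg: "0 \<le> eexp x"
  by (cases x) (auto simp: eexp_def)

lemma eexp_eln: "0 \<le> y \<Longrightarrow> eexp (eln y) = y"
  by (auto simp: eln_def)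

lemma eexp_add: "x \<noteq> \<infinity> \<Longrightarrow> y \<noteq> \<infinity> \<Longrightarrow> eexp (x + y) = eexp x * eexp y"
  by (cases x; cases y) (auto simp: exp_add)

lemma eexp_mono: "x \<le> y \<Longrightarrow> y \<noteq> \<infinity> \<Longrightarrow> eexp x \<le> eexp y"
  by (cases x; cases y) auto

lemma eexp_le_iff: "x \<noteq> \<infinity> \<Longrightarrow> y \<noteq> \<infinity> \<Longrightarrow> eexp x \<le> eexp y \<longleftrightarrow> x \<le> y"
  by (cases x; cases y) auto

lemma eexp_SUP:
  assumes "finite A" "A \<noteq> {}" "\<And>a. a \<in> A \<Longrightarrow> g a \<noteq> \<infinity>"
  shows "eexp (SUP a\<in>A. g a) = Max ((\<lambda>a. eexp (g a)) ` A)"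
proof -
  obtain a0 where a0: "a0 \<in> A" "(SUP a\<in>A. g a) = g a0"
    using assms(1,2) by (rule finite_SUP_attained)
  have "Max ((\<lambda>a. eexp (g a)) ` A) = eexp (g a0)"
  proof (rule Max_eqI)
    fix y assume "y \<in> (\<lambda>a. eexp (g a)) ` A"
    then obtain a where a: "a \<in> A" "y = eexp (g a)" by blast
    have "g a \<le> g a0" using a0 SUP_upper[OF a(1), of g] by simp
    then show "y \<le> eexp (g a0)" using a eexp_mono assms(3)[OF a0(1)] by blast
  qed (use assms a0 in auto)
  then show ?thesis using a0 by simp
qed

lemma eexp_INF:
  assumes "finite A" "A \<noteq> {}" "\<And>a. a \<in> A \<Longrightarrow> g a \<noteq> \<infinity>"
  shows "eexp (INF a\<in>A. g a) = Min ((\<lambda>a. eexp (g a)) ` A)"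
proof -
  obtain a0 where a0: "a0 \<in> A" "(INF a\<in>A. g a) = g a0"
    using assms(1,2) by (rule finite_INF_attained)
  have "Min ((\<lambda>a. eexp (g a)) ` A) = eexp (g a0)"
  proof (rule Min_eqI)
    fix y assume "y \<in> (\<lambda>a. eexp (g a)) ` A"
    then obtain a where a: "a \<in> A" "y = eexp (g a)" by blast
    have "g a0 \<le> g a" using a0 INF_lower[OF a(1), of g] by simp
    then show "eexp (g a0) \<le> y" using a eexp_mono assms(3)[OF a(1)] by blast
  qed (use assms a0 in auto)
  then show ?thesis using a0 by simp
qed

lemma continuous_on_Max:
  fixes f :: "'a \<Rightarrow> 'b::topological_space \<Rightarrow> real"
  assumes "finite A" "A \<noteq> {}" "\<And>a. a \<in> A \<Longrightarrow> continuous_on S (f a)"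
  shows "continuous_on S (\<lambda>x. Max ((\<lambda>a. f a x) ` A))"
  using assms
proof (induction A rule: finite_ne_induct)
  case (insert a F)
  then have "continuous_on S (\<lambda>x. max (f a x) (Max ((\<lambda>a. f a x) ` F)))"
    by (intro continuous_on_max) auto
  then show ?case using insert by simp
qed simp

lemma continuous_on_Min:
  fixes f :: "'a \<Rightarrow> 'b::topological_space \<Rightarrow> real"
  assumes "finite A" "A \<noteq> {}" "\<And>a. a \<in> A \<Longrightarrow> continuous_on S (f a)"
  shows "continuous_on S (\<lambda>x. Min ((\<lambda>a. f a x) ` A))"
  using assms
proof (induction A rule: finite_ne_induct)
  case (insert a F)
  then have "continuous_on S (\<lambda>x. min (f a x) (Min ((\<lambda>a. f a x) ` F)))"
    by (intro continuous_on_min) auto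
  then show ?case using insert by simp
qed simp

definition normalized :: "(real^'n::finite) set" where
  "normalized = {y. (\<forall>i. 0 \<le> y $ i \<and> y $ i \<le> 1) \<and> (MAX i. y $ i) = 1}"

lemma compact_normalized: "compact normalized"
proof -
  have "normalized = cbox 0 1 \<inter> {y. (MAX i. y $ i) = 1}"
    by (auto simp: normalized_def mem_box_cart)
  moreover have "closed {y::real^'n. (MAX i. y $ i) = 1}"
    by (intro closed_Collect_eq continuous_on_Max continuous_on_component continuous_on_id
        continuous_on_const) auto
  ultimately show ?thesis by (metis compact_Int_closed compact_cbox)
qed

context cone_bipartition
begin

definition T_exp :: "real^'n \<Rightarrow> 'n \<Rightarrow> real" where
  "T_exp y l = Min ((\<lambda>v. Max ((\<lambda>k. eexp (v k) * exp (- real_of_ereal (v l)) * y $ k) ` opp_block l)) ` V_at l)"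

lemma continuous_on_T_exp: "continuous_on S (\<lambda>y. T_exp y l)"
  unfolding T_exp_def
  by (intro continuous_on_Min continuous_on_Max finite_V_at V_at_ne finite opp_block_ne
      continuous_on_mult_left continuous_on_component continuous_on_id)

lemma T_exp_nonneg:
  assumes "\<And>k. 0 \<le> y $ k" shows "0 \<le> T_exp y l"
proof -
  have "0 \<le> Max ((\<lambda>k. eexp (v k) * exp (- real_of_ereal (v l)) * y $ k) ` opp_block l)" for v
  proof -
    obtain k where "k \<in> opp_block l" using opp_block_ne by blast
    moreover have "0 \<le> eexp (v k) * exp (- real_of_ereal (v l)) * y $ k"
      using assms eexp_nonneg by simp
    ultimately show ?thesis by (meson Max_ge finite finite_imageI image_eqI order_trans)
  qed
  then show ?thesis unfolding T_exp_def using finite_V_at V_at_ne by simp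
qed

lemma eexp_T:
  assumes u: "u \<in> tvecs" shows "eexp (T u l) = T_exp (\<chi> k. eexp (u k)) l"
proof -
  have u_ne_top: "u k \<noteq> \<infinity>" for k using u by (auto simp: tvecs_def)
  have SUP_ne_top: "(SUP k\<in>opp_block l. v k + u k) \<noteq> \<infinity>" if "v \<in> V" for v
    using that opp_block_ne V_tvecs u by (intro SUP_finite_less_top finite tvecs_add_ne_top) auto
  have inner: "eexp (- v l + (SUP k\<in>opp_block l. v k + u k))
      = Max ((\<lambda>k. eexp (v k) * exp (- real_of_ereal (v l)) * eexp (u k)) ` opp_block l)"
    if v: "v \<in> V_at l" for v
  proof -
    have vV: "v \<in> V" "v l \<noteq> -\<infinity>" using v by (auto simp: V_at_def)
    obtain b where b: "v l = ereal b" using vV by (rule V_entry_real)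
    have "eexp (- v l + (SUP k\<in>opp_block l. v k + u k)) = exp (- b) * eexp (SUP k\<in>opp_block l. v k + u k)"
      using b SUP_ne_top[OF vV(1)] by (simp add: eexp_add)
    also have "\<dots> = exp (- b) * Max ((\<lambda>k. eexp (v k + u k)) ` opp_block l)"
      using V_ne_top[OF vV(1)] u_ne_top by (subst eexp_SUP) (auto simp: opp_block_ne)
    also have "\<dots> = Max ((\<lambda>x. exp (- b) * x) ` ((\<lambda>k. eexp (v k + u k)) ` opp_block l))"
      by (rule mono_Max_commute) (auto intro: monoI simp: opp_block_ne)
    also have "\<dots> = Max ((\<lambda>k. eexp (v k) * exp (- real_of_ereal (v l)) * eexp (u k)) ` opp_block l)"
      using b V_ne_top[OF vV(1)] u_ne_top by (simp add: image_image eexp_add ac_simps)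
    finally show ?thesis .
  qed
  have "eexp (T u l) = Min ((\<lambda>v. eexp (- v l + (SUP k\<in>opp_block l. v k + u k))) ` V_at l)"
    unfolding T_eq
  proof (intro eexp_INF finite_V_at V_at_ne)
    fix v assume "v \<in> V_at l"
    then obtain b where "v l = ereal b" by (auto simp: V_at_def elim: V_entry_real)
    then show "- v l + (SUP k\<in>opp_block l. v k + u k) \<noteq> \<infinity>"
      using SUP_ne_top \<open>v \<in> V_at l\<close> by (auto simp: V_at_def)
  qed
  also have "\<dots> = T_exp (\<chi> k. eexp (u k)) l"
    unfolding T_exp_def using inner by (simp cong: image_cong)
  finally show ?thesis .
qed

lemma subeigen_vector_normalized:
  assumes "subeigen lam"
  obtains a where "a \<in> tvecs" "\<And>l. ereal lam + a l \<le> T a l" "\<And>k. a k \<le> 0" "\<exists>k. a k = 0"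
proof -
  obtain a where a: "a \<in> tvecs" "\<exists>l. a l \<noteq> -\<infinity>" "\<And>l. ereal lam + a l \<le> T a l"
    using assms unfolding subeigen_def by blast
  have a_ne_top: "a k \<noteq> \<infinity>" for k using a(1) by (auto simp: tvecs_def)
  obtain k0 where k0: "(SUP k\<in>UNIV. a k) = a k0" using finite_SUP_attained[of "UNIV :: 'n set" a] by auto
  have a_le: "a k \<le> a k0" for k using k0 SUP_upper[of k UNIV a] by simp
  obtain m where m: "a k0 = ereal m"
    using a(2) a_le a_ne_top[of k0] by (cases "a k0") (auto simp: ereal_infty_less_eq2(2))
  define a' where "a' k = ereal (- m) + a k" for k
  show ?thesis
  proof (rule that)
    show "a' \<in> tvecs" using a_ne_top by (auto simp: tvecs_def a'_def)
    show "ereal lam + a' l \<le> T a' l" for l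
    proof -
      have "ereal (- m) + (ereal lam + a l) \<le> ereal (- m) + T a l" using a(3) by (rule add_left_mono)
      moreover have "T a' l = ereal (- m) + T a l" unfolding a'_def[abs_def] by (rule T_add_const)
      ultimately show ?thesis by (simp add: a'_def ac_simps)
    qed
    show "a' k \<le> 0" for k using a_le[of k] m a_ne_top[of k] by (cases "a k") (auto simp: a'_def)
    show "\<exists>k. a' k = 0" using m by (intro exI[of _ k0]) (simp add: a'_def)
  qed
qed

lemma subeigen_imp_T_exp:
  assumes "subeigen lam"
  obtains y where "y \<in> normalized" "\<And>l. exp lam * y $ l \<le> T_exp y l"
proof -
  obtain a where a: "a \<in> tvecs" "\<And>l. ereal lam + a l \<le> T a l" "\<And>k. a k \<le> 0" "\<exists>k. a k = 0"
    using assms by (rule subeigen_vector_normalized) (rule that)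
  define y where "y = (\<chi> k. eexp (a k))"
  have y01: "0 \<le> y $ i \<and> y $ i \<le> 1" for i
    using eexp_nonneg eexp_mono[OF a(3)[of i]] by (simp add: y_def zero_ereal_def)
  have "(MAX i. y $ i) = 1"
  proof (rule Max_eqI)
    obtain k where "a k = 0" using a(4) by blast
    then have "y $ k = 1" by (simp add: y_def zero_ereal_def)
    then show "1 \<in> range (\<lambda>i. y $ i)" by (metis rangeI)
  qed (use y01 in auto)
  then have "y \<in> normalized" using y01 by (simp add: normalized_def)
  moreover have "exp lam * y $ l \<le> T_exp y l" for l
  proof -
    have "exp lam * y $ l = eexp (ereal lam + a l)"
      using eexp_add[of "ereal lam" "a l"] a(1) by (simp add: y_def tvecs_def)
    also have "\<dots> \<le> eexp (T a l)"
      using a(2)[of l] T_ne_top[OF a(1), of l] by (rule eexp_mono)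
    also have "\<dots> = T_exp y l" unfolding y_def by (rule eexp_T[OF a(1)])
    finally show ?thesis .
  qed
  ultimately show ?thesis using that by blast
qed

lemma T_exp_imp_subeigen:
  assumes y: "y \<in> normalized" and le: "\<And>l. exp lam * y $ l \<le> T_exp y l"
  shows "subeigen lam"
proof -
  define u where "u k = eln (y $ k)" for k
  have y_nonneg: "0 \<le> y $ k" for k using y by (simp add: normalized_def)
  have u_tvecs: "u \<in> tvecs" by (auto simp: tvecs_def u_def eln_def)
  have y_eq: "(\<chi> k. eexp (u k)) = y" by (simp add: vec_eq_iff u_def eexp_eln y_nonneg)
  have "(MAX i. y $ i) \<in> range (\<lambda>i. y $ i)" by (rule Max_in) auto
  then obtain k0 where "(MAX i. y $ i) = y $ k0" by blast
  then have "y $ k0 = 1" using y by (simp add: normalized_def)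
  then have u_k0: "u k0 \<noteq> -\<infinity>" by (simp add: u_def eln_def)
  have "ereal lam + u l \<le> T u l" for l
  proof -
    have "eexp (ereal lam + u l) = exp lam * y $ l"
      using eexp_add[of "ereal lam" "u l"] u_tvecs y_nonneg[of l]
      by (simp add: tvecs_def u_def eexp_eln)
    also have "\<dots> \<le> T_exp y l" by (rule le)
    also have "\<dots> = eexp (T u l)" using eexp_T[OF u_tvecs, of l] y_eq by simp
    finally show ?thesis
      using eexp_le_iff[of "ereal lam + u l" "T u l"] T_ne_top[OF u_tvecs, of l] u_tvecs
      by (auto simp: tvecs_def)
  qed
  then show ?thesis unfolding subeigen_def using u_tvecs u_k0 by blast
qed

lemma T_exp_imp_supereigen:
  assumes pos: "\<And>k. 0 < y $ k" and "0 < s" and le: "\<And>l. T_exp y l \<le> s * y $ l"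
  shows "supereigen (ln s)"
proof -
  define z where "z k = ln (y $ k)" for k
  have z_tvecs: "(\<lambda>k. ereal (z k)) \<in> tvecs" by (simp add: tvecs_def)
  have y_eq: "(\<chi> k. eexp (ereal (z k))) = y" using pos by (simp add: vec_eq_iff z_def)
  have "T (\<lambda>k. ereal (z k)) l \<le> ereal (ln s) + ereal (z l)" for l
  proof -
    have "eexp (T (\<lambda>k. ereal (z k)) l) = T_exp y l" using eexp_T[OF z_tvecs, of l] y_eq by simp
    also have "\<dots> \<le> s * y $ l" by (rule le)
    also have "\<dots> = eexp (ereal (ln s + z l))" using \<open>0 < s\<close> pos[of l] by (simp add: z_def exp_add)
    finally have "eexp (T (\<lambda>k. ereal (z k)) l) \<le> eexp (ereal (ln s + z l))" .
    then have "T (\<lambda>k. ereal (z k)) l \<le> ereal (ln s + z l)"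
      using eexp_le_iff[of "T (\<lambda>k. ereal (z k)) l" "ereal (ln s + z l)"] T_ne_top[OF z_tvecs, of l]
      by simp
    then show ?thesis by simp
  qed
  then show ?thesis unfolding supereigen_def by blast
qed

text \<open>Brouwer's fixed point theorem applied to \<open>y \<mapsto> (T_exp y + e) / max (T_exp y + e)\<close> on the
  unit cube.\<close>

lemma T_exp_perturbed_eigenvector:
  assumes e: "0 < e"
  obtains y m where "y \<in> normalized" "0 < m" "\<And>l. T_exp y l + e = m * y $ l"
proof -
  define m where "m y = (MAX k. T_exp y k + e)" for y
  define G where "G y = (\<chi> l. (T_exp y l + e) / m y)" for y
  have cube_iff: "y \<in> cbox 0 1 \<longleftrightarrow> (\<forall>i. 0 \<le> y $ i \<and> y $ i \<le> 1)" for y :: "real^'n"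
    by (simp add: mem_box_cart)
  have T_exp_nn: "y \<in> cbox 0 1 \<Longrightarrow> 0 \<le> T_exp y l" for y l
    by (rule T_exp_nonneg) (simp add: cube_iff)
  have m_ge: "T_exp y l + e \<le> m y" for y l unfolding m_def by (rule Max_ge) auto
  have m_pos: "y \<in> cbox 0 1 \<Longrightarrow> 0 < m y" for y
    using m_ge[of y] T_exp_nn[of y] e by (meson add_nonneg_pos less_le_trans)
  have "continuous_on (cbox 0 1) m" unfolding m_def
    by (intro continuous_on_Max continuous_on_add continuous_on_T_exp continuous_on_const) auto
  then have "continuous_on (cbox 0 1) G" unfolding G_def
    by (intro continuous_on_vec_lambda continuous_on_divide continuous_on_add continuous_on_T_exp
        continuous_on_const) (use m_pos in force)+
  moreover have "G \<in> cbox 0 1 \<rightarrow> cbox 0 1"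
  proof
    fix y :: "real^'n" assume y: "y \<in> cbox 0 1"
    show "G y \<in> cbox 0 1" unfolding cube_iff G_def
      using T_exp_nn[OF y] e m_pos[OF y] m_ge[of y] by (auto simp: divide_le_eq_1 less_imp_le add_nonneg_pos)
  qed
  moreover have "cbox 0 1 \<noteq> ({} :: (real^'n) set)" using cube_iff[of 0] by auto
  ultimately obtain y where y: "y \<in> cbox 0 1" "G y = y"
    using brouwer[OF compact_cbox convex_box(1)] by blast
  have fix_eq: "T_exp y l + e = m y * y $ l" for l
  proof -
    have "y $ l = (T_exp y l + e) / m y" using y(2) by (metis G_def vec_lambda_beta)
    then show ?thesis using m_pos[OF y(1)] by (simp add: field_simps)
  qed
  have "(MAX i. y $ i) = 1"
  proof (rule Max_eqI)
    have "m y \<in> range (\<lambda>k. T_exp y k + e)" unfolding m_def by (rule Max_in) auto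
    then obtain k0 where "m y = T_exp y k0 + e" by blast
    then have "y $ k0 = 1" using fix_eq[of k0] m_pos[OF y(1)] by simp
    then show "1 \<in> range (\<lambda>i. y $ i)" by (metis rangeI)
  qed (use y(1) cube_iff in auto)
  then have "y \<in> normalized" using y(1) by (simp add: normalized_def cube_iff)
  then show ?thesis using that m_pos[OF y(1)] fix_eq by blast
qed

lemma not_supereigen_imp_approx_subeigen:
  assumes "\<not> supereigen lam" "0 < e"
  shows "\<exists>y\<in>normalized. \<forall>l. exp lam * y $ l - e \<le> T_exp y l"
proof -
  obtain y m where y: "y \<in> normalized" and "0 < m" and fix_eq: "\<And>l. T_exp y l + e = m * y $ l"
    using assms(2) by (rule T_exp_perturbed_eigenvector) auto
  have y_pos: "0 < y $ l" for l
    using fix_eq[of l] T_exp_nonneg[of y l] y \<open>0 < e\<close> \<open>0 < m\<close>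
    by (simp add: normalized_def) (metis add_nonneg_pos zero_less_mult_pos)
  have "\<not> m \<le> exp lam"
  proof
    assume "m \<le> exp lam"
    have "T_exp y l \<le> m * y $ l" for l using fix_eq[of l] \<open>0 < e\<close> by linarith
    then have "supereigen (ln m)" using T_exp_imp_supereigen[OF y_pos \<open>0 < m\<close>] by blast
    moreover have "ln m \<le> lam"
      using \<open>m \<le> exp lam\<close> \<open>0 < m\<close> ln_le_cancel_iff[of m "exp lam"] by simp
    ultimately show False using assms(1) supereigen_mono by simp
  qed
  have "exp lam * y $ l - e \<le> T_exp y l" for l
  proof -
    have "exp lam * y $ l \<le> m * y $ l"
      using \<open>\<not> m \<le> exp lam\<close> y_pos[of l] by (intro mult_right_mono) auto
    then show ?thesis using fix_eq[of l] by simp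
  qed
  then show ?thesis using y by blast
qed

lemma T_exp_approx_limit:
  assumes approx: "\<And>e. 0 < e \<Longrightarrow> \<exists>y\<in>normalized. \<forall>l. exp lam * y $ l - e \<le> T_exp y l"
  shows "\<exists>y\<in>normalized. \<forall>l. exp lam * y $ l \<le> T_exp y l"
proof -
  define f where "f n = (SOME y. y \<in> normalized \<and> (\<forall>l. exp lam * y $ l - inverse (Suc n) \<le> T_exp y l))"
    for n :: nat
  have "\<exists>y. y \<in> normalized \<and> (\<forall>l. exp lam * y $ l - inverse (Suc n) \<le> T_exp y l)" for n
    using approx[of "inverse (Suc n)"] by auto
  then have "f n \<in> normalized \<and> (\<forall>l. exp lam * f n $ l - inverse (Suc n) \<le> T_exp (f n) l)" for n
    unfolding f_def by (rule someI_ex)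
  then have f: "f n \<in> normalized" "exp lam * f n $ l - inverse (Suc n) \<le> T_exp (f n) l" for n l
    by blast+
  obtain y r where y: "y \<in> normalized" "strict_mono r" "(f \<circ> r) \<longlonglongrightarrow> y"
    using compact_normalized f(1) unfolding compact_def by meson
  have "exp lam * y $ l \<le> T_exp y l" for l
  proof -
    have "isCont (\<lambda>y. T_exp y l) y"
      using continuous_on_T_exp[of UNIV l] by (simp add: continuous_on_eq_continuous_at)
    then have T_lim: "(\<lambda>n. T_exp ((f \<circ> r) n) l) \<longlonglongrightarrow> T_exp y l"
      using y(3) by (rule isCont_tendsto_compose)
    have y_lim: "(\<lambda>n. (f \<circ> r) n $ l) \<longlonglongrightarrow> y $ l" using y(3) by (rule tendsto_vec_nth)
    have e_lim: "(\<lambda>n. inverse (real (Suc (r n)))) \<longlonglongrightarrow> 0"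
      using LIMSEQ_subseq_LIMSEQ[OF LIMSEQ_inverse_real_of_nat y(2)] by (simp add: o_def)
    have "(\<lambda>n. T_exp ((f \<circ> r) n) l - exp lam * (f \<circ> r) n $ l + inverse (real (Suc (r n))))
        \<longlonglongrightarrow> T_exp y l - exp lam * y $ l + 0"
      by (intro tendsto_intros T_lim y_lim e_lim)
    then have "0 \<le> T_exp y l - exp lam * y $ l + 0"
      by (rule LIMSEQ_le_const) (use f(2) in \<open>auto simp: algebra_simps\<close>)
    then show ?thesis by simp
  qed
  then show ?thesis using y(1) by blast
qed

lemma subeigen_or_supereigen: "subeigen lam \<or> supereigen lam"
  using not_supereigen_imp_approx_subeigen T_exp_approx_limit T_exp_imp_subeigen by blast

lemma subeigen_closed:
  assumes below: "\<And>lam'. lam' < lam \<Longrightarrow> subeigen lam'"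
  shows "subeigen lam"
proof -
  have "\<exists>y\<in>normalized. \<forall>l. exp lam * y $ l - e \<le> T_exp y l" if e: "0 < e" for e
  proof -
    define d where "d = e / exp lam"
    have "0 < d" using e by (simp add: d_def)
    obtain y where y: "y \<in> normalized" "\<And>l. exp (lam - d) * y $ l \<le> T_exp y l"
      using below[of "lam - d"] \<open>0 < d\<close> by (auto elim: subeigen_imp_T_exp)
    have "exp lam - exp (lam - d) = exp lam * (1 - exp (- d))"
      by (simp add: exp_diff field_simps exp_minus)
    also have "\<dots> \<le> exp lam * d" using exp_ge_add_one_self[of "- d"] by (intro mult_left_mono) auto
    finally have diff: "exp lam - exp (lam - d) \<le> e" by (simp add: d_def)
    have "exp lam * y $ l - e \<le> T_exp y l" for l
    proof -
      have y01: "0 \<le> y $ l" "y $ l \<le> 1" using y(1) by (auto simp: normalized_def)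
      have "(exp lam - exp (lam - d)) * y $ l \<le> exp lam - exp (lam - d)"
        using y01 \<open>0 < d\<close> by (simp add: mult_left_le)
      then have "exp lam * y $ l - e \<le> exp (lam - d) * y $ l" using diff by (simp add: algebra_simps)
      then show ?thesis using y(2)[of l] by simp
    qed
    then show ?thesis using y(1) by blast
  qed
  then show ?thesis using T_exp_approx_limit T_exp_imp_subeigen by blast
qed

end

section \<open>Closedness of the super-eigenvalues\<close>

fun walk_weight :: "('a \<Rightarrow> 'a \<Rightarrow> ereal) \<Rightarrow> 'a list \<Rightarrow> ereal" where
  "walk_weight c [] = 0"
| "walk_weight c [x] = 0"
| "walk_weight c (x # y # ys) = c x y + walk_weight c (y # ys)"

lemma walk_weight_append:
  "walk_weight c (xs @ [x] @ ys) = walk_weight c (xs @ [x]) + walk_weight c (x # ys)"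
proof (induction xs)
  case (Cons a xs)
  then show ?case by (cases xs) (simp_all add: add.assoc)
qed simp

lemma walk_weight_ne_top: "(\<And>x y. c x y \<noteq> \<infinity>) \<Longrightarrow> walk_weight c xs \<noteq> \<infinity>"
  by (induction c xs rule: walk_weight.induct) auto

lemma walk_weight_potential_le:
  assumes "\<And>x y. c x y + ereal (z y) \<le> ereal (z x)" "xs \<noteq> []"
  shows "walk_weight c xs + ereal (z (last xs)) \<le> ereal (z (hd xs))"
  using assms(2)
proof (induction xs rule: induct_list012)
  case (3 x y ys)
  have "walk_weight c (x # y # ys) + ereal (z (last (x # y # ys)))
      = c x y + (walk_weight c (y # ys) + ereal (z (last (y # ys))))"
    by (simp add: add.assoc)
  also have "\<dots> \<le> c x y + ereal (z y)" using 3 by (intro add_left_mono) simp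
  also have "\<dots> \<le> ereal (z x)" by (rule assms(1))
  finally show ?case by simp
qed simp_all

lemma walk_weight_add_const:
  "walk_weight (\<lambda>x y. c x y + ereal d) xs = walk_weight c xs + ereal (d * real (length xs - 1))"
proof (induction xs rule: induct_list012)
  case (3 x y ys)
  have "walk_weight (\<lambda>x y. c x y + ereal d) (x # y # ys)
      = c x y + walk_weight c (y # ys) + (ereal d + ereal (d * real (length (y # ys) - 1)))"
    using 3 by (simp only: walk_weight.simps ac_simps)
  also have "ereal d + ereal (d * real (length (y # ys) - 1)) = ereal (d * real (length (x # y # ys) - 1))"
    by (simp add: algebra_simps)
  finally show ?case by simp
qed (simp_all add: zero_ereal_def)

text \<open>A walk that repeats a vertex contains a cycle; removing it does not decrease the weight.\<close>

lemma walk_weight_le_short_walk: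
  fixes c :: "'a::finite \<Rightarrow> 'a \<Rightarrow> ereal"
  assumes cycles: "\<And>xs. xs \<noteq> [] \<Longrightarrow> hd xs = last xs \<Longrightarrow> walk_weight c xs \<le> 0"
    and "xs \<noteq> []"
  obtains ys where "ys \<noteq> []" "hd ys = hd xs" "length ys \<le> CARD('a)" "walk_weight c xs \<le> walk_weight c ys"
  using assms(2)
proof (induction xs arbitrary: thesis rule: length_induct)
  case (1 xs)
  show ?case
  proof (cases "length xs \<le> CARD('a)")
    case False
    have "\<not> distinct xs"
      using False card_mono[of UNIV "set xs"] by (auto simp: distinct_card[symmetric])
    then obtain as x bs cs where xs: "xs = as @ [x] @ bs @ [x] @ cs"
      using not_distinct_decomp by blast
    define xs' where "xs' = as @ [x] @ cs"
    have "walk_weight c xs = walk_weight c (as @ [x]) + (walk_weight c ((x # bs) @ [x]) + walk_weight c (x # cs))"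
      unfolding xs using walk_weight_append[of c as x "bs @ [x] @ cs"] walk_weight_append[of c "x # bs" x cs]
      by simp
    also have "\<dots> \<le> walk_weight c (as @ [x]) + (0 + walk_weight c (x # cs))"
      using cycles[of "(x # bs) @ [x]"] by (intro add_left_mono add_right_mono) simp
    also have "\<dots> = walk_weight c xs'" unfolding xs'_def using walk_weight_append[of c as x cs] by simp
    finally have le: "walk_weight c xs \<le> walk_weight c xs'" .
    have "length xs' < length xs" "xs' \<noteq> []" "hd xs' = hd xs"
      by (simp_all add: xs xs'_def) (cases as; simp)
    then show ?thesis
      using "1.IH" le "1.prems"(1) by (metis order_trans)
  qed (use 1 in blast)
qed

text \<open>The potential of \<open>x\<close> is the heaviest walk of length at most \<open>CARD('a)\<close> starting at \<open>x\<close>.\<close>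

lemma potential_of_nonpos_cycles:
  fixes c :: "'a::finite \<Rightarrow> 'a \<Rightarrow> ereal"
  assumes ne_top: "\<And>x y. c x y \<noteq> \<infinity>"
    and cycles: "\<And>xs. xs \<noteq> [] \<Longrightarrow> hd xs = last xs \<Longrightarrow> walk_weight c xs \<le> 0"
  shows "\<exists>z :: 'a \<Rightarrow> real. \<forall>x y. c x y + ereal (z y) \<le> ereal (z x)"
proof -
  define W where "W x = {ys. ys \<noteq> [] \<and> hd ys = x \<and> length ys \<le> CARD('a)}" for x :: 'a
  have finite_W: "finite (W x)" for x
    by (rule finite_subset[OF _ finite_lists_length_le[of "UNIV :: 'a set" "CARD('a)"]]) (auto simp: W_def)
  have W_ne: "[x] \<in> W x" for x by (simp add: W_def)
  define Z where "Z x = Max (walk_weight c ` W x)" for x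
  have Z_ge: "walk_weight c ys \<le> Z x" if "ys \<in> W x" for ys x
    unfolding Z_def using finite_W that by (intro Max_ge) auto
  have Z_in: "Z x \<in> walk_weight c ` W x" for x
    unfolding Z_def using finite_W W_ne by (intro Max_in) auto
  have "walk_weight c xs \<noteq> \<infinity>" for xs using ne_top by (rule walk_weight_ne_top)
  then have "Z x \<noteq> \<infinity>" for x using Z_in[of x] by (metis imageE)
  moreover have "0 \<le> Z x" for x using Z_ge[OF W_ne[of x]] by simp
  ultimately have Z_real: "Z x = ereal (real_of_ereal (Z x))" for x
    by (cases "Z x") auto
  have "c x y + ereal (real_of_ereal (Z y)) \<le> ereal (real_of_ereal (Z x))" for x y
  proof -
    obtain ys where ys: "ys \<in> W y" "Z y = walk_weight c ys" using Z_in[of y] by auto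
    then obtain ys' where ys': "ys = y # ys'" by (cases ys) (auto simp: W_def)
    have "c x y + ereal (real_of_ereal (Z y)) = walk_weight c (x # ys)"
      using ys ys' Z_real[of y] by simp
    also obtain vs where "vs \<noteq> []" "hd vs = x" "length vs \<le> CARD('a)" "walk_weight c (x # ys) \<le> walk_weight c vs"
      using walk_weight_le_short_walk[OF cycles, of "x # ys"] by auto
    then have "walk_weight c (x # ys) \<le> Z x" using Z_ge[of vs x] by (auto simp: W_def)
    finally show ?thesis using Z_real[of x] by simp
  qed
  then show ?thesis by (intro exI[of _ "\<lambda>x. real_of_ereal (Z x)"] allI)
qed

text \<open>Feasibility of a system of difference constraints is a closed condition: approximate
  potentials bound every cycle weight by \<open>d\<close> times its length, for every \<open>d > 0\<close>.\<close>

lemma potential_of_approx_potentials: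
  fixes c :: "'a::finite \<Rightarrow> 'a \<Rightarrow> ereal"
  assumes ne_top: "\<And>x y. c x y \<noteq> \<infinity>"
    and approx: "\<And>d. 0 < d \<Longrightarrow> \<exists>z::'a \<Rightarrow> real. \<forall>x y. c x y + ereal (z y) \<le> ereal (d + z x)"
  shows "\<exists>z :: 'a \<Rightarrow> real. \<forall>x y. c x y + ereal (z y) \<le> ereal (z x)"
proof (rule potential_of_nonpos_cycles[OF ne_top])
  fix xs :: "'a list" assume xs: "xs \<noteq> []" "hd xs = last xs"
  define L where "L = real (length xs - 1)"
  have ne_top_xs: "walk_weight c xs \<noteq> \<infinity>" using ne_top by (rule walk_weight_ne_top)
  have bound: "walk_weight c xs \<le> ereal (d * L)" if d: "0 < d" for d
  proof -
    obtain z where z: "\<And>x y. c x y + ereal (z y) \<le> ereal (d + z x)" using approx[OF d] by blast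
    have "c x y + ereal (- d) + ereal (z y) \<le> ereal (z x)" for x y
      using z[of x y] by (cases "c x y") (auto simp: ac_simps)
    then have "walk_weight (\<lambda>x y. c x y + ereal (- d)) xs + ereal (z (last xs)) \<le> ereal (z (hd xs))"
      using xs(1) by (intro walk_weight_potential_le) (simp add: add.assoc)
    then show ?thesis
      using xs(2) ne_top_xs
      by (cases "walk_weight c xs") (auto simp: walk_weight_add_const L_def)
  qed
  show "walk_weight c xs \<le> 0"
  proof (cases "walk_weight c xs")
    case (real w)
    have "w \<le> 0"
    proof (rule ccontr)
      assume "\<not> w \<le> 0"
      then have "0 < w / (L + 1)" by (simp add: L_def)
      from bound[OF this] real have "w \<le> w / (L + 1) * L" by simp
      moreover have "w / (L + 1) * L < w" using \<open>\<not> w \<le> 0\<close> by (simp add: L_def field_simps)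
      ultimately show False by simp
    qed
    then show ?thesis using real by simp
  qed (use ne_top_xs in auto)
qed

context cone_bipartition
begin

text \<open>A policy selects for every \<open>l\<close> the vector of \<open>V\<close> realising the infimum in \<open>T_l\<close>; for a fixed
  policy \<open>T\<close> becomes max-plus linear.\<close>

definition policies :: "('n \<Rightarrow> 'n \<Rightarrow> ereal) set" where
  "policies = {\<sigma>. \<forall>l. \<sigma> l \<in> V_at l}"

definition policy_supereigen :: "('n \<Rightarrow> 'n \<Rightarrow> ereal) \<Rightarrow> real \<Rightarrow> bool" where
  "policy_supereigen \<sigma> lam \<longleftrightarrow> (\<exists>z::'n \<Rightarrow> real. \<forall>l. \<forall>k\<in>opp_block l.
      \<sigma> l k + ereal (z k) \<le> ereal lam + \<sigma> l l + ereal (z l))"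

lemma finite_policies: "finite policies"
proof -
  have "policies = PiE UNIV V_at" by (auto simp: policies_def PiE_def extensional_def)
  then show ?thesis using finite_PiE[of UNIV V_at] finite_V_at by simp
qed

lemma policies_ne: "policies \<noteq> {}"
  using V_at_ne by (auto simp: policies_def intro!: exI[of _ "\<lambda>l. SOME v. v \<in> V_at l"] some_in_eq[THEN iffD2])

lemma policy_entry_real:
  assumes "\<sigma> \<in> policies" obtains b where "\<sigma> l l = ereal b"
  using assms by (auto simp: policies_def V_at_def elim: V_entry_real)

lemma policy_in_V: "\<sigma> \<in> policies \<Longrightarrow> \<sigma> l \<in> V"
  by (auto simp: policies_def V_at_def)

lemma policy_supereigen_mono:
  assumes "policy_supereigen \<sigma> lam" "lam \<le> lam'" shows "policy_supereigen \<sigma> lam'"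
proof -
  obtain z where z: "\<And>l k. k \<in> opp_block l \<Longrightarrow> \<sigma> l k + ereal (z k) \<le> ereal lam + \<sigma> l l + ereal (z l)"
    using assms(1) unfolding policy_supereigen_def by blast
  have "ereal lam + \<sigma> l l + ereal (z l) \<le> ereal lam' + \<sigma> l l + ereal (z l)" for l
    using assms(2) by (intro add_right_mono) simp
  then show ?thesis unfolding policy_supereigen_def using z order_trans by blast
qed

lemma supereigen_iff_policy: "supereigen lam \<longleftrightarrow> (\<exists>\<sigma>\<in>policies. policy_supereigen \<sigma> lam)"
proof
  assume "supereigen lam"
  then obtain z where z: "\<And>l. T (\<lambda>k. ereal (z k)) l \<le> ereal lam + ereal (z l)"
    unfolding supereigen_def by blast
  have "\<forall>l. \<exists>v. v \<in> V_at l \<and> T (\<lambda>k. ereal (z k)) l = - v l + (SUP k\<in>opp_block l. v k + ereal (z k))"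
  proof
    fix l show "\<exists>v. v \<in> V_at l \<and> T (\<lambda>k. ereal (z k)) l = - v l + (SUP k\<in>opp_block l. v k + ereal (z k))"
      by (rule T_attained[of l "\<lambda>k. ereal (z k)"]) blast
  qed
  from choice[OF this] obtain \<sigma> where \<sigma>: "\<And>l. \<sigma> l \<in> V_at l"
    "\<And>l. T (\<lambda>k. ereal (z k)) l = - \<sigma> l l + (SUP k\<in>opp_block l. \<sigma> l k + ereal (z k))"
    by blast
  have pol: "\<sigma> \<in> policies" using \<sigma>(1) by (simp add: policies_def)
  have "\<sigma> l k + ereal (z k) \<le> ereal lam + \<sigma> l l + ereal (z l)" if k: "k \<in> opp_block l" for l k
  proof -
    obtain b where b: "\<sigma> l l = ereal b" using pol by (rule policy_entry_real)
    have "- \<sigma> l l + (\<sigma> l k + ereal (z k)) \<le> - \<sigma> l l + (SUP k\<in>opp_block l. \<sigma> l k + ereal (z k))"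
      using k by (intro add_left_mono SUP_upper)
    also have "\<dots> \<le> ereal lam + ereal (z l)" using \<sigma>(2)[of l] z[of l] by simp
    finally show ?thesis using b by (cases "\<sigma> l k") (auto simp: ac_simps)
  qed
  then show "\<exists>\<sigma>\<in>policies. policy_supereigen \<sigma> lam" using pol unfolding policy_supereigen_def by blast
next
  assume "\<exists>\<sigma>\<in>policies. policy_supereigen \<sigma> lam"
  then obtain \<sigma> z where pol: "\<sigma> \<in> policies"
    and z: "\<And>l k. k \<in> opp_block l \<Longrightarrow> \<sigma> l k + ereal (z k) \<le> ereal lam + \<sigma> l l + ereal (z l)"
    unfolding policy_supereigen_def by blast
  have "T (\<lambda>k. ereal (z k)) l \<le> ereal lam + ereal (z l)" for l
  proof -
    obtain b where b: "\<sigma> l l = ereal b" using pol by (rule policy_entry_real)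
    have "T (\<lambda>k. ereal (z k)) l \<le> - \<sigma> l l + (SUP k\<in>opp_block l. \<sigma> l k + ereal (z k))"
      using pol by (intro T_le) (simp add: policies_def)
    also have "\<dots> \<le> - \<sigma> l l + ereal (lam + b + z l)"
    proof (intro add_left_mono SUP_least)
      fix k assume "k \<in> opp_block l"
      then show "\<sigma> l k + ereal (z k) \<le> ereal (lam + b + z l)" using z[of k l] b by simp
    qed
    also have "\<dots> = ereal lam + ereal (z l)" using b by simp
    finally show ?thesis .
  qed
  then show "supereigen lam" unfolding supereigen_def by blast
qed

lemma policy_supereigen_closed:
  assumes pol: "\<sigma> \<in> policies" and above: "\<And>lam'. lam < lam' \<Longrightarrow> policy_supereigen \<sigma> lam'"
  shows "policy_supereigen \<sigma> lam"
proof -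
  define c where "c x y = (if y \<in> opp_block x then \<sigma> x y + ereal (- real_of_ereal (\<sigma> x x) - lam) else -\<infinity>)"
    for x y
  have c_le_iff: "c x y + ereal (z y) \<le> ereal (d + z x) \<longleftrightarrow>
      (y \<in> opp_block x \<longrightarrow> \<sigma> x y + ereal (z y) \<le> ereal (lam + d) + \<sigma> x x + ereal (z x))" for d z x y
  proof -
    obtain b where b: "\<sigma> x x = ereal b" using pol by (rule policy_entry_real)
    show ?thesis using V_ne_top[OF policy_in_V[OF pol], of x y] b
      by (cases "\<sigma> x y") (auto simp: c_def algebra_simps)
  qed
  have ne_top: "c x y \<noteq> \<infinity>" for x y
    using V_ne_top[OF policy_in_V[OF pol], of x y] by (cases "\<sigma> x y") (auto simp: c_def)
  have "\<exists>z::'n \<Rightarrow> real. \<forall>x y. c x y + ereal (z y) \<le> ereal (z x)"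
  proof (rule potential_of_approx_potentials[OF ne_top])
    fix d :: real assume "0 < d"
    then obtain z where "\<And>l k. k \<in> opp_block l \<Longrightarrow> \<sigma> l k + ereal (z k) \<le> ereal (lam + d) + \<sigma> l l + ereal (z l)"
      using above[of "lam + d"] unfolding policy_supereigen_def by auto
    then show "\<exists>z::'n \<Rightarrow> real. \<forall>x y. c x y + ereal (z y) \<le> ereal (d + z x)"
      by (auto simp: c_le_iff)
  qed
  then obtain z where "\<And>x y. c x y + ereal (z y) \<le> ereal (0 + z x)" by auto
  then have "\<And>x y. y \<in> opp_block x \<Longrightarrow> \<sigma> x y + ereal (z y) \<le> ereal lam + \<sigma> x x + ereal (z x)"
    unfolding c_le_iff by simp
  then show ?thesis unfolding policy_supereigen_def by blast
qed

text \<open>Since there are only finitely many policies, one of them certifies every \<open>lam' > lam\<close>.\<close>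

lemma supereigen_closed:
  assumes above: "\<And>lam'. lam < lam' \<Longrightarrow> supereigen lam'"
  shows "supereigen lam"
proof -
  have "\<exists>\<sigma>\<in>policies. \<forall>lam'>lam. policy_supereigen \<sigma> lam'"
  proof (rule ccontr)
    assume "\<not> ?thesis"
    then have "\<forall>\<sigma>\<in>policies. \<exists>lam'>lam. \<not> policy_supereigen \<sigma> lam'" by blast
    then obtain f where f: "\<And>\<sigma>. \<sigma> \<in> policies \<Longrightarrow> lam < f \<sigma> \<and> \<not> policy_supereigen \<sigma> (f \<sigma>)"
      by metis
    define lam1 where "lam1 = Min (f ` policies)"
    have "lam1 \<in> f ` policies" unfolding lam1_def using finite_policies policies_ne by (intro Min_in) auto
    then have "lam < lam1" using f by auto
    then obtain \<sigma> where \<sigma>: "\<sigma> \<in> policies" "policy_supereigen \<sigma> lam1"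
      using above supereigen_iff_policy by blast
    have "lam1 \<le> f \<sigma>" unfolding lam1_def using finite_policies \<sigma>(1) by (intro Min_le) auto
    with \<sigma> f show False by (blast dest: policy_supereigen_mono)
  qed
  then show ?thesis using policy_supereigen_closed supereigen_iff_policy by blast
qed

end

section \<open>The spectral radius\<close>

context cone_bipartition
begin

definition lam_star :: ereal where
  "lam_star = (SUP lam\<in>{lam. subeigen lam}. ereal lam)"

lemma supereigen_0: "supereigen 0"
proof -
  define x where "x l = real_of_ereal (SUP v\<in>V. v l)" for l
  have V_ne: "V \<noteq> {}" using V_covers by blast
  have x: "(SUP v\<in>V. v l) = ereal (x l)" for l
  proof -
    obtain v where "v \<in> V" "v l \<noteq> -\<infinity>" using V_covers by blast
    then have "(SUP v\<in>V. v l) \<noteq> -\<infinity>" by (metis SUP_upper ereal_infty_less_eq2(2))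
    moreover have "(SUP v\<in>V. v l) \<noteq> \<infinity>" using V_ne V_ne_top by (intro SUP_finite_less_top finite_V)
    ultimately show ?thesis by (cases "SUP v\<in>V. v l") (auto simp: x_def)
  qed
  have "witnessed_on (opp_block l) (lower_opp 0 x l) l" for l
  proof -
    obtain v where v: "v \<in> V" "(SUP v\<in>V. v l) = v l"
      using finite_V V_ne by (rule finite_SUP_attained)
    have vl: "v l = ereal (x l)" using v(2) x[of l] by simp
    have "v k \<le> ereal (x k)" for k using SUP_upper[OF v(1), of "\<lambda>w. w k"] x[of k] by simp
    then have "v k + ereal (x l) \<le> ereal (x k) + ereal (x l)" for k by (rule add_right_mono)
    then have "v k + ereal (x l) \<le> v l + ereal (x k)" for k unfolding vl by (simp add: add.commute)
    then show ?thesis using v(1) vl unfolding witnessed_on_def lower_opp_def by force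
  qed
  then show ?thesis using supereigen_iff_witnessed_on_opp[of 0] by auto
qed

lemma subeigen_le_lam_star: "subeigen lam \<Longrightarrow> ereal lam \<le> lam_star"
  unfolding lam_star_def by (rule SUP_upper) simp

lemma lam_star_le_0: "lam_star \<le> 0"
  unfolding lam_star_def using subeigen_le_supereigen[OF _ supereigen_0] by (auto intro: SUP_least)

lemma supereigen_above_lam_star: "lam_star < ereal lam \<Longrightarrow> supereigen lam"
  using subeigen_or_supereigen subeigen_le_lam_star by (meson leD)

lemma lam_star_real_imp_subeigen:
  assumes "lam_star = ereal L" shows "subeigen L"
proof (rule subeigen_closed)
  fix lam' assume "lam' < L"
  then have "ereal lam' < lam_star" using assms by simp
  then obtain lam where "subeigen lam" "lam' < lam"
    unfolding lam_star_def less_SUP_iff by auto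
  then show "subeigen lam'" by (simp add: subeigen_mono)
qed

lemma lam_star_real_imp_supereigen:
  assumes "lam_star = ereal L" shows "supereigen L"
  by (rule supereigen_closed) (use supereigen_above_lam_star assms in auto)

lemma lam_star_real_eigenvector:
  assumes "lam_star = ereal L"
  obtains u where "u \<in> tvecs" "\<exists>l. u l \<noteq> -\<infinity>" "\<And>l. T u l = ereal L + u l"
  using lam_star_real_imp_subeigen[OF assms] lam_star_real_imp_supereigen[OF assms]
  by (rule eigenvector_of_subeigen_supereigen) (rule that)

lemma spec_rad_eq_lam_star: "spec_rad T = lam_star"
proof -
  define E where "E = {lam. lam \<noteq> \<infinity> \<and> (\<exists>u\<in>tvecs. (\<exists>l. u l \<noteq> -\<infinity>) \<and> T u = (\<lambda>l. lam + u l))}"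
  have "Sup E \<le> lam_star"
  proof (rule Sup_least)
    fix lam assume "lam \<in> E"
    then obtain u where u: "lam \<noteq> \<infinity>" "u \<in> tvecs" "\<exists>l. u l \<noteq> -\<infinity>" "T u = (\<lambda>l. lam + u l)"
      by (auto simp: E_def)
    show "lam \<le> lam_star"
    proof (cases lam)
      case (real r)
      then have "subeigen r" unfolding subeigen_def using u by auto
      then show ?thesis using real subeigen_le_lam_star by simp
    qed (use u in auto)
  qed
  moreover have "lam_star \<le> Sup E"
  proof (cases lam_star)
    case (real L)
    then obtain u where "u \<in> tvecs" "\<exists>l. u l \<noteq> -\<infinity>" "\<And>l. T u l = ereal L + u l"
      by (rule lam_star_real_eigenvector) (rule that)
    then have "ereal L \<in> E" unfolding E_def by auto
    then show ?thesis using real by (simp add: Sup_upper)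
  qed (use lam_star_le_0 in auto)
  ultimately show ?thesis by (simp add: spec_rad_def E_def)
qed

lemma lam_star_le_dist_H:
  assumes a: "a \<in> tvecs" "\<exists>l. a l \<noteq> -\<infinity>"
  shows "- lam_star \<le> dist_H V (trop_hyp I J a)"
proof (rule ccontr)
  assume "\<not> ?thesis"
  then obtain s where s: "dist_H V (trop_hyp I J a) < ereal s" "ereal s < - lam_star"
    using ereal_dense2 by (metis not_le)
  then have "subeigen (- s)"
    unfolding subeigen_def using a dist_H_less_imp_subeigen[OF a(1) s(1)] by blast
  then have "ereal (- s) \<le> lam_star" by (rule subeigen_le_lam_star)
  with s(2) show False by (cases lam_star) auto
qed

lemma dist_H_le_lam_star:
  assumes "a \<in> tvecs" "lam_star = ereal L" "\<And>l. ereal L + a l \<le> T a l"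
  shows "dist_H V (trop_hyp I J a) \<le> - lam_star"
  using dist_H_trop_hyp_le[OF assms(1) _ assms(3)] lam_star_le_0 assms(2) by simp

lemma vert_int_mono: "r \<le> r' \<Longrightarrow> vert_int J w r \<subseteq> vert_int J w r'"
  unfolding vert_int_def by (blast intro: order_trans ereal_minus_le_minus[THEN iffD2])

lemma vert_int_radius_le_lam_star:
  assumes "0 \<le> r" "vert_int J w r \<subseteq> trop_span V"
  shows "r \<le> - lam_star"
proof -
  have bound: "lam \<le> - t" if "subeigen lam" "0 \<le> t" "ereal t \<le> r" for lam t
  proof -
    have "vert_int J w (ereal t) \<subseteq> trop_span V"
      using vert_int_mono[OF that(3)] assms(2) by blast
    then have "supereigen (- t)" using that(2) by (rule vert_int_imp_supereigen)
    then show ?thesis using subeigen_le_supereigen that(1) by blast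
  qed
  show ?thesis
  proof (cases r)
    case (real t)
    have "lam_star \<le> ereal (- t)" unfolding lam_star_def
      by (rule SUP_least) (use bound assms(1) real in auto)
    then show ?thesis using real by (cases lam_star) auto
  next
    case PInf
    have "\<not> subeigen lam" for lam
      using bound[of lam "\<bar>lam\<bar> + 1"] PInf by auto
    then have "lam_star = -\<infinity>" by (simp add: lam_star_def bot_ereal_def)
    then show ?thesis by simp
  qed (use assms(1) in simp)
qed

lemma lam_star_eq_Sup_vert_int:
  "- lam_star = Sup {r::ereal. 0 \<le> r \<and> (\<exists>w. vert_int J w r \<subseteq> trop_span V)}" (is "_ = Sup ?R")
proof (rule antisym)
  have in_R: "ereal t \<in> ?R" if "supereigen (- t)" "0 \<le> t" for t
    using supereigen_imp_vert_int[OF that] that(2) by auto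
  show "- lam_star \<le> Sup ?R"
  proof (cases lam_star)
    case (real L)
    then have "ereal (- L) \<in> ?R"
      using in_R[of "- L"] lam_star_real_imp_supereigen lam_star_le_0 by simp
    then show ?thesis using real by (simp add: Sup_upper)
  next
    case MInf
    have le_Sup: "ereal t \<le> Sup ?R" if "0 \<le> t" for t
    proof (rule Sup_upper, rule in_R[OF _ that])
      show "supereigen (- t)" using MInf by (intro supereigen_above_lam_star) simp
    qed
    have "ereal B \<le> Sup ?R" for B
    proof -
      have "ereal B \<le> ereal (max B 0)" by simp
      also have "\<dots> \<le> Sup ?R" by (rule le_Sup) simp
      finally show ?thesis .
    qed
    then have "Sup ?R = \<infinity>" by (rule ereal_top)
    then show ?thesis by simp
  qed (use lam_star_le_0 in simp)
  show "Sup ?R \<le> - lam_star"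
    by (rule Sup_least) (use vert_int_radius_le_lam_star in blast)
qed

lemma dist_H_subeigen_lam_star:
  assumes b: "b \<in> tvecs" "\<exists>l. b l \<noteq> -\<infinity>" and sub: "\<And>l. lam_star + b l \<le> T b l"
  shows "dist_H V (trop_hyp I J b) = - lam_star"
proof (cases lam_star)
  case (real L)
  then have "dist_H V (trop_hyp I J b) \<le> - lam_star"
    using sub by (intro dist_H_le_lam_star[OF b(1) real]) simp
  then show ?thesis using lam_star_le_dist_H[OF b] by simp
qed (use lam_star_le_dist_H[OF b] lam_star_le_0 in auto)

lemma dist_H_trop_hyp_attains_lam_star:
  obtains a where "a \<in> tvecs" "\<exists>l. a l \<noteq> -\<infinity>" "dist_H V (trop_hyp I J a) = - lam_star"
proof (cases lam_star)
  case (real L)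
  obtain u where u: "u \<in> tvecs" "\<exists>l. u l \<noteq> -\<infinity>" "\<And>l. T u l = ereal L + u l"
    using real by (rule lam_star_real_eigenvector) (rule that)
  have "dist_H V (trop_hyp I J u) = - lam_star"
    using u real by (intro dist_H_subeigen_lam_star) auto
  then show ?thesis using that u(1,2) by blast
next
  case MInf
  have zero: "(\<lambda>_. 0) \<in> tvecs" "\<exists>l. (\<lambda>_. 0 :: ereal) l \<noteq> -\<infinity>" by (auto simp: tvecs_def)
  show ?thesis by (rule that[OF zero]) (use lam_star_le_dist_H[OF zero] MInf in simp)
qed (use lam_star_le_0 in simp)

lemma vert_int_radius_lam_star:
  assumes "\<bar>lam_star\<bar> \<noteq> \<infinity>"
  shows "\<exists>c. vert_int J c (- lam_star) \<subseteq> trop_span V"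
proof -
  obtain L where L: "lam_star = ereal L" using assms by (cases lam_star) auto
  have "supereigen (- (- L))" "0 \<le> - L"
    using lam_star_real_imp_supereigen[OF L] lam_star_le_0 L by simp_all
  then obtain c where "vert_int J c (ereal (- L)) \<subseteq> trop_span V"
    by (rule supereigen_imp_vert_int) (rule that)
  then show ?thesis using L by auto
qed

end

theorem theorem5p8:
  fixes I J :: "'n::finite set" and V :: "('n \<Rightarrow> ereal) set"
  assumes "I \<noteq> {}" "J \<noteq> {}" "I \<union> J = UNIV" "I \<inter> J = {}"
    and "finite V" "V \<subseteq> tvecs"
    and "\<forall>v\<in>V. \<exists>l. v l \<noteq> -\<infinity>"
    and "\<forall>l. \<exists>v\<in>V. v l \<noteq> -\<infinity>"
  shows "(\<exists>a\<in>tvecs. (\<exists>l. a l \<noteq> -\<infinity>) \<and>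
            dist_H V (trop_hyp I J a) = - spec_rad (T_IJ V I J) \<and>
            (\<forall>a'\<in>tvecs. (\<exists>l. a' l \<noteq> -\<infinity>) \<longrightarrow>
                dist_H V (trop_hyp I J a) \<le> dist_H V (trop_hyp I J a')))
      \<and> - spec_rad (T_IJ V I J) =
          Sup {r::ereal. 0 \<le> r \<and> (\<exists>w. vert_int J w r \<subseteq> trop_span V)}
      \<and> (\<forall>b\<in>tvecs. (\<exists>l. b l \<noteq> -\<infinity>) \<longrightarrow>
            (\<forall>l. spec_rad (T_IJ V I J) + b l \<le> T_IJ V I J b l) \<longrightarrow>
            dist_H V (trop_hyp I J b) = - spec_rad (T_IJ V I J))
      \<and> (\<bar>spec_rad (T_IJ V I J)\<bar> \<noteq> \<infinity> \<longrightarrow>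
            (\<exists>c. vert_int J c (- spec_rad (T_IJ V I J)) \<subseteq> trop_span V))"
proof -
  interpret cone_bipartition I J V
    using assms by unfold_locales auto
  obtain a where a: "a \<in> tvecs" "\<exists>l. a l \<noteq> -\<infinity>" "dist_H V (trop_hyp I J a) = - lam_star"
    by (rule dist_H_trop_hyp_attains_lam_star)
  then have best: "\<exists>a\<in>tvecs. (\<exists>l. a l \<noteq> -\<infinity>) \<and> dist_H V (trop_hyp I J a) = - lam_star \<and>
      (\<forall>a'\<in>tvecs. (\<exists>l. a' l \<noteq> -\<infinity>) \<longrightarrow> dist_H V (trop_hyp I J a) \<le> dist_H V (trop_hyp I J a'))"
    using lam_star_le_dist_H by (intro bexI[of _ a]) auto
  have subeigen_best: "\<forall>b\<in>tvecs. (\<exists>l. b l \<noteq> -\<infinity>) \<longrightarrow> (\<forall>l. lam_star + b l \<le> T b l) \<longrightarrow>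
      dist_H V (trop_hyp I J b) = - lam_star"
    using dist_H_subeigen_lam_star by blast
  show ?thesis
    unfolding spec_rad_eq_lam_star using best lam_star_eq_Sup_vert_int subeigen_best vert_int_radius_lam_star
    by (intro conjI impI)
qed
end
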